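(* Let $u_\varepsilon\colon\Omega_\varepsilon\to\mathcal{S}_\varepsilon$ and let $G_{u_\varepsilon}\in\mathcal{D}_2(\Omega\times\mathbb{R}^2)$ be the current associated to (the piecewise constant interpolation of) $u_\varepsilon$. For every open set $A \subset\subset \Omega$ and $\varepsilon$ small enough, $$\frac{1}{2} \sum_{\langle i, j \rangle} \varepsilon\, d_{\mathbb{S}^1}\big(u_\varepsilon(\varepsilon i), u_\varepsilon(\varepsilon j) \big) \geq \int_{A \times \mathbb{R}^2}\Phi(\vec G_{u_\varepsilon})\,d |G_{u_\varepsilon}| .$$
   Context: $\Omega\subset\mathbb{R}^2$ bounded open with Lipschitz boundary, $\mathbb{R}^2\cong\mathbb{C}$. $N_\varepsilon\in\mathbb{N}$, $\theta_\varepsilon=2\pi/N_\varepsilon$, $\mathcal{S}_\varepsilon=\{\exp(\iota k\theta_\varepsilon):k=0,\dots,N_\varepsilon-1\}$, $\Omega_\varepsilon=\Omega\cap\varepsilon\mathbb{Z}^2$; $\sum_{\langle i,j\rangle}$ runs over ordered pairs $(i,j)\in\mathbb{Z}^2\times\mathbb{Z}^2$ with $|i-j|=1$ and $\varepsilon i,\varepsilon j\in\Omega_\varepsilon$. $d_{\mathbb{S}^1}$ is the geodesic distance on $\mathbb{S}^1$. $\mathcal{PC}_\varepsilon(S)$ is the set of maps $u\colon\mathbb{R}^2\to S$ constant on each square $\varepsilon i+[0,\varepsilon)^2$; lattice maps are identified with such interpolations (arbitrarily extended). Currents: $\mathcal{D}_k(O)$ is the dual of smooth compactly supported $k$-forms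 on $O$; finite-mass currents are written $T=\vec T|T|$ with $|T|$ the total variation measure and $|\vec T|=1$ $|T|$-a.e. Points of $\mathbb{R}^2\times\mathbb{R}^2$ are $(x,y)$ with bases $e_1,e_2$ and $\bar e_1,\bar e_2$; $\hat x^1=x^2$, $\hat x^2=x^1$. For $u\in\mathcal{PC}_\varepsilon(\mathbb{S}^1)$, $G_u\in\mathcal{D}_2(\Omega\times\mathbb{R}^2)$ is defined by $G_u(\phi\,dx^1\wedge dx^2)=\int_\Omega\phi(x,u(x))dx$, $G_u(\phi\,d\hat x^l\wedge dy^m)=(-1)^{2-l}\int_{J_u}\{\int_{\gamma_x}\phi(x,y)dy^m\}\nu_u^l(x)\,d\mathcal{H}^1(x)$, $G_u(\phi\,dy^1\wedge dy^2)=0$, for $\phi\in C^\infty_c(\Omega\times\mathbb{R}^2)$, where $J_u$ is the jump set, $\nu_u$ its normal and $\gamma_x$ the oriented geodesic arc in $\mathbb{S}^1$ from $u^-(x)$ to $u^+(x)$ (for antipodal traces with phases $\varphi^\pm\in[0,2\pi)$: counterclockwise if $\Psi(\varphi^+-\varphi^-)=\pi$, clockwise if $=-\pi$, where $\Psi(t)=t-Q(t)$ and $Q(t)$ is the point of $2\pi\mathbb{Z}$ nearest to $t$, minimal modulus in case of tie). For a 2-vector $\xi=\xi^{\bar00}e_1\wedge e_2+\xi^{21}e_1\wedge\bar e_1+\xi^{22}e_1\wedge\bar e_2+\xi^{11}e_2\wedge\bar e_1+\xi^{12}e_2\wedge\bar e_2+\xi^{0\bar0}\bar e_1\wedge\bar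 e_2$, $\Phi(\xi)=\sqrt{(\xi^{21})^2+(\xi^{22})^2}+\sqrt{(\xi^{11})^2+(\xi^{12})^2}$. *)

theory Defs
  imports "HOL-Analysis.Analysis"
begin

fun Ck :: "nat \<Rightarrow> ('a::euclidean_space \<Rightarrow> real) \<Rightarrow> bool" where
  "Ck 0 f = continuous_on UNIV f"
| "Ck (Suc k) f = (f differentiable_on UNIV \<and>
      (\<forall>b\<in>Basis. Ck k (\<lambda>x. frechet_derivative f (at x) b)))"

definition Cinf :: "('a::euclidean_space \<Rightarrow> real) \<Rightarrow> bool" where
  "Cinf f \<longleftrightarrow> (\<forall>k. Ck k f)"

text \<open>Basis 2-covectors / 2-vectors of R^2 x R^2 (points (x,y), x,y complex):
  E12 ~ dx1/\dx2,  H l m ~ d(hat x^l)/\dy^m (hat x^1 = x^2, hat x^2 = x^1), Y12 ~ dy1/\dy2.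
  For a 2-vector xi, xi H21 is the coefficient of e1/\bar e1, xi H11 that of e2/\bar e1, etc.\<close>
datatype f2 = E12 | H11 | H12 | H21 | H22 | Y12

definition hidx :: "nat \<Rightarrow> nat \<Rightarrow> f2" where
  "hidx l m = (if l = 1 then (if m = 1 then H11 else H12) else (if m = 1 then H21 else H22))"

type_synonym form2 = "f2 \<Rightarrow> complex \<times> complex \<Rightarrow> real"
type_synonym vec2 = "f2 \<Rightarrow> real"

definition pair2 :: "vec2 \<Rightarrow> vec2 \<Rightarrow> real" where
  "pair2 w v = w E12 * v E12 + w H11 * v H11 + w H12 * v H12 + w H21 * v H21
     + w H22 * v H22 + w Y12 * v Y12"

definition norm2 :: "vec2 \<Rightarrow> real" where
  "norm2 v = sqrt (pair2 v v)"

definition Phi :: "vec2 \<Rightarrow> real" where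
  "Phi v = sqrt ((v H21)\<^sup>2 + (v H22)\<^sup>2) + sqrt ((v H11)\<^sup>2 + (v H12)\<^sup>2)"

definition test_form :: "complex set \<Rightarrow> form2 \<Rightarrow> bool" where
  "test_form Om \<omega> \<longleftrightarrow> (\<forall>I. Cinf (\<omega> I) \<and> compact (closure {p. \<omega> I p \<noteq> 0})
      \<and> closure {p. \<omega> I p \<noteq> 0} \<subseteq> Om \<times> UNIV)"

definition lipschitz_boundary :: "complex set \<Rightarrow> bool" where
  "lipschitz_boundary Om \<longleftrightarrow> (\<forall>p\<in>frontier Om. \<exists>c r h g L. cmod c = 1 \<and> 0 < r \<and> 0 < h \<and>
      L-lipschitz_on UNIV g \<and> g 0 = 0 \<and> (\<forall>s. \<bar>s\<bar> < r \<longrightarrow> \<bar>g s\<bar> < h / 2) \<and>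
      (\<forall>x. let z = c * (x - p) in \<bar>Re z\<bar> < r \<and> \<bar>Im z\<bar> < h \<longrightarrow>
            (x \<in> Om \<longleftrightarrow> Im z < g (Re z))))"

definition Lpt :: "real \<Rightarrow> int \<times> int \<Rightarrow> complex" where
  "Lpt \<epsilon> i = Complex (\<epsilon> * of_int (fst i)) (\<epsilon> * of_int (snd i))"

definition Sset :: "nat \<Rightarrow> complex set" where
  "Sset N = {exp (\<i> * (of_nat k * (2 * pi / of_nat N))) | k. k < N}"

definition PC :: "real \<Rightarrow> complex set \<Rightarrow> (complex \<Rightarrow> complex) set" where
  "PC \<epsilon> S = {u. (\<forall>x. u x \<in> S) \<and>
      (\<forall>i s t. 0 \<le> s \<and> s < \<epsilon> \<and> 0 \<le> t \<and> t < \<epsilon> \<longrightarrow> u (Lpt \<epsilon> i + Complex s t) = u (Lpt \<epsilon> i))}"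

definition nn_pairs :: "real \<Rightarrow> complex set \<Rightarrow> ((int \<times> int) \<times> (int \<times> int)) set" where
  "nn_pairs \<epsilon> Om = {(i, j). dist (Lpt 1 i) (Lpt 1 j) = 1 \<and> Lpt \<epsilon> i \<in> Om \<and> Lpt \<epsilon> j \<in> Om}"

definition dS1 :: "complex \<Rightarrow> complex \<Rightarrow> real" where
  "dS1 z w = arccos (Re (cnj z * w))"

definition energy :: "real \<Rightarrow> complex set \<Rightarrow> (complex \<Rightarrow> complex) \<Rightarrow> real" where
  "energy \<epsilon> Om u = 1 / 2 * (\<Sum>(i, j)\<in>nn_pairs \<epsilon> Om. \<epsilon> * dS1 (u (Lpt \<epsilon> i)) (u (Lpt \<epsilon> j)))"

definition phase :: "complex \<Rightarrow> real" where
  "phase z = (SOME \<phi>. 0 \<le> \<phi> \<and> \<phi> < 2 * pi \<and> z = cis \<phi>)"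

definition twopiZ :: "real set" where
  "twopiZ = {2 * pi * of_int k | k. True}"

definition Qn :: "real \<Rightarrow> real" where
  "Qn t = (SOME q. q \<in> twopiZ \<and> (\<forall>p\<in>twopiZ. \<bar>t - q\<bar> \<le> \<bar>t - p\<bar>) \<and>
              (\<forall>p\<in>twopiZ. \<bar>t - p\<bar> = \<bar>t - q\<bar> \<longrightarrow> \<bar>q\<bar> \<le> \<bar>p\<bar>))"

definition Psi :: "real \<Rightarrow> real" where
  "Psi t = t - Qn t"

definition oint :: "real \<Rightarrow> real \<Rightarrow> (real \<Rightarrow> real) \<Rightarrow> real" where
  "oint a b g = (if a \<le> b then integral {a..b} g else - integral {b..a} g)"

text \<open>Line integral of f dy^m over the oriented geodesic arc gamma from z to w,
  parametrised by y = exp(i t), t from phase z to phase z + Psi(phase w - phase z).\<close>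
definition arcint :: "(complex \<Rightarrow> real) \<Rightarrow> complex \<Rightarrow> complex \<Rightarrow> nat \<Rightarrow> real" where
  "arcint f z w m = oint (phase z) (phase z + Psi (phase w - phase z))
      (\<lambda>t. f (cis t) * (if m = 1 then - sin t else cos t))"

definition evec :: "nat \<Rightarrow> int \<times> int" where
  "evec l = (if l = 1 then (1, 0) else (0, 1))"

text \<open>Common edge of the squares of i and i + e_l, parametrised by s in [0,1];
  its normal is e_l (pointing towards the square of i + e_l, the + side).\<close>
definition edgept :: "real \<Rightarrow> int \<times> int \<Rightarrow> nat \<Rightarrow> real \<Rightarrow> complex" where
  "edgept \<epsilon> i l s = (if l = 1 then Lpt \<epsilon> (i + evec 1) + \<i> * complex_of_real (\<epsilon> * s)
                      else Lpt \<epsilon> (i + evec 2) + complex_of_real (\<epsilon> * s))"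

definition edges :: "real \<Rightarrow> complex set \<Rightarrow> ((int \<times> int) \<times> nat) set" where
  "edges \<epsilon> Om = {(i, l). l \<in> {1, 2} \<and> (\<exists>s\<in>{0..1}. edgept \<epsilon> i l s \<in> Om)}"

text \<open>G_u(omega) for u in PC_eps: the jump set of u in Omega is contained in the union of the
  lattice edges (edges with equal traces contribute 0), nu_u = e_l, u^- = u(eps i),
  u^+ = u(eps (i + e_l)), and H^1 on an edge is eps ds.\<close>
definition Gcur :: "real \<Rightarrow> complex set \<Rightarrow> (complex \<Rightarrow> complex) \<Rightarrow> form2 \<Rightarrow> real" where
  "Gcur \<epsilon> Om u \<omega> = integral Om (\<lambda>x. \<omega> E12 (x, u x))
     + (\<Sum>(i, l)\<in>edges \<epsilon> Om. \<epsilon> * integral {0..1} (\<lambda>s.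
          \<Sum>l'\<in>{1, 2}. \<Sum>m\<in>{1, 2}. (-1) ^ (2 - l') *
             arcint (\<lambda>y. \<omega> (hidx l' m) (edgept \<epsilon> i l s, y)) (u (Lpt \<epsilon> i)) (u (Lpt \<epsilon> (i + evec l))) m
             * (if l' = l then 1 else 0)))"

text \<open>(mu, xi) is the polar decomposition G = xi |G| of a finite-mass current on Om x R^2:
  mu a Radon measure on Om x R^2 (locally finite), |xi| = 1 mu-a.e., G(omega) = int <omega, xi> dmu.
  This determines mu = |G| and xi = vec G (mu-a.e.).\<close>
definition is_polar :: "complex set \<Rightarrow> (form2 \<Rightarrow> real) \<Rightarrow> (complex \<times> complex) measure
                        \<Rightarrow> (complex \<times> complex \<Rightarrow> vec2) \<Rightarrow> bool" where
  "is_polar Om G \<mu> \<xi> \<longleftrightarrow> sets \<mu> = sets borel \<and> emeasure \<mu> (- (Om \<times> UNIV)) = 0 \<and>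
     (\<forall>K. compact K \<and> K \<subseteq> Om \<times> UNIV \<longrightarrow> emeasure \<mu> K < \<infinity>) \<and>
     (\<forall>I. (\<lambda>p. \<xi> p I) \<in> borel_measurable \<mu>) \<and>
     (AE p in \<mu>. norm2 (\<xi> p) = 1) \<and>
     (\<forall>\<omega>. test_form Om \<omega> \<longrightarrow> G \<omega> = (\<integral>p. pair2 (\<lambda>I. \<omega> I p) (\<xi> p) \<partial>\<mu>))"

end

theory Submission
  imports Defs "HOL-Computational_Algebra.Polynomial"
begin

text \<open>
  Write \<open>|G\<^sub>u| = \<mu>\<close> and \<open>G\<^sub>u = \<xi> \<mu>\<close>. Testing the current with forms whose only nonzero
  component is \<open>\<phi>\<close> at \<open>hidx l m\<close> shows that for every Borel set \<open>B\<close> in a cylinder over \<open>A\<close> the integral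
  \<open>\<integral>\<^sub>B \<xi>\<^sub>l\<^sub>m d\<mu>\<close> equals the jump part of \<open>G\<^sub>u\<close> on \<open>B\<close>: a sum over the lattice edges in the
  direction \<open>l\<close> of integrals of \<open>-sin t\<close> or \<open>cos t\<close> over the part of (edge \<open>\<times>\<close> geodesic arc) lying in \<open>B\<close>.
  This is first shown for smooth \<open>\<phi>\<close>, then for indicators of open sets by dominated convergence,
  and then for Borel sets by Dynkin's lemma.

  Partition \<open>B\<close> according to which of the angles \<open>2 \<pi> k / n\<close> approximates the direction of
  \<open>(\<xi>\<^sub>l\<^sub>1, \<xi>\<^sub>l\<^sub>2)\<close>. Since \<open>|cos \<theta> (- sin t) + sin \<theta> cos t| \<le> 1\<close>, every edge meeting \<open>A\<close>
  contributes at most \<open>\<epsilon>\<close> times the length of its arc, so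
  \<open>cos (\<pi> / n) \<integral>\<^sub>B |\<xi>\<^sub>l| d\<mu> \<le> \<Sum> \<epsilon> d\<^sub>S\<^sub>1\<close> over these edges. Let \<open>n \<rightarrow> \<infinity>\<close>,
  add the two directions, and note that each edge near \<open>A\<close> appears twice, as two ordered
  nearest-neighbour pairs, in the discrete energy.
\<close>

section \<open>Smooth functions\<close>

lemma Ck_SucD: "Ck (Suc k) f \<Longrightarrow> Ck k f"
  by (induction k arbitrary: f) (auto intro: differentiable_imp_continuous_on)

lemma Ck_Suc_has_derivative:
  "Ck (Suc k) f \<Longrightarrow> (f has_derivative frechet_derivative f (at x)) (at x)"
  by (simp add: differentiable_on_def frechet_derivative_works)

lemma Ck_SucI:
  assumes "\<And>x. (f has_derivative f' x) (at x)" and "\<And>b. b \<in> Basis \<Longrightarrow> Ck k (\<lambda>x. f' x b)"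
  shows "Ck (Suc k) f"
proof -
  have "f differentiable_on UNIV"
    using assms(1) by (auto simp: differentiable_on_def differentiable_def)
  moreover have "(\<lambda>x. frechet_derivative f (at x) b) = (\<lambda>x. f' x b)" for b
    using frechet_derivative_at[OF assms(1)] by metis
  ultimately show ?thesis
    using assms(2) by simp
qed

lemma Ck_const: "Ck k (\<lambda>x. c)"
  by (induction k arbitrary: c) (auto intro!: Ck_SucI[where f' = "\<lambda>_ _. 0"])

lemma Ck_add: "Ck k f \<Longrightarrow> Ck k g \<Longrightarrow> Ck k (\<lambda>x. f x + g x)"
proof (induction k arbitrary: f g)
  case (Suc k)
  show ?case
  proof (rule Ck_SucI)
    show "((\<lambda>x. f x + g x) has_derivative
        (\<lambda>b. frechet_derivative f (at x) b + frechet_derivative g (at x) b)) (at x)" for x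
      using Suc.prems by (intro has_derivative_add Ck_Suc_has_derivative)
  qed (use Suc in auto)
qed (auto intro: continuous_on_add)

lemma Ck_mult: "Ck k f \<Longrightarrow> Ck k g \<Longrightarrow> Ck k (\<lambda>x. f x * g x)"
proof (induction k arbitrary: f g)
  case (Suc k)
  show ?case
  proof (rule Ck_SucI)
    show "((\<lambda>x. f x * g x) has_derivative (\<lambda>b. f x * frechet_derivative g (at x) b
        + frechet_derivative f (at x) b * g x)) (at x)" for x
      using Suc.prems by (intro has_derivative_mult Ck_Suc_has_derivative)
    have "Ck k f" "Ck k g"
      using Suc.prems by (auto intro: Ck_SucD)
    then show "Ck k (\<lambda>x. f x * frechet_derivative g (at x) b + frechet_derivative f (at x) b * g x)"
      if "b \<in> Basis" for b
      using Suc that by (auto intro!: Ck_add)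
  qed
qed (auto intro: continuous_on_mult)

lemma Ck_diff: "Ck k f \<Longrightarrow> Ck k g \<Longrightarrow> Ck k (\<lambda>x. f x - g x)"
proof -
  assume "Ck k f" "Ck k g"
  then have "Ck k (\<lambda>x. f x + (-1) * g x)"
    by (intro Ck_add Ck_mult Ck_const)
  then show ?thesis
    by simp
qed

lemma Ck_prod: "finite S \<Longrightarrow> (\<And>j. j \<in> S \<Longrightarrow> Ck k (f j)) \<Longrightarrow> Ck k (\<lambda>x. \<Prod>j\<in>S. f j x)"
  by (induction S rule: finite_induct) (auto intro: Ck_mult Ck_const)

lemma Cinf_imp_continuous_on: "Cinf f \<Longrightarrow> continuous_on S f"
  unfolding Cinf_def using Ck.simps(1) continuous_on_subset by blast

definition derivative_tower :: "(nat \<Rightarrow> real \<Rightarrow> real) \<Rightarrow> bool" where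
  "derivative_tower D \<longleftrightarrow> (\<forall>n t. (D n has_real_derivative D (Suc n) t) (at t))"

lemma Ck_compose_affine:
  fixes v :: "'a::euclidean_space"
  assumes "derivative_tower D"
  shows "Ck k (\<lambda>p. D n (p \<bullet> v + c))"
proof (induction k arbitrary: n)
  case 0
  have "continuous_on UNIV (D n)"
    using assms unfolding derivative_tower_def
    by (meson DERIV_isCont continuous_at_imp_continuous_on)
  then show ?case
    by (auto intro!: continuous_on_compose2[of UNIV "D n"] continuous_intros)
next
  case (Suc k)
  have "((\<lambda>p. D n (p \<bullet> v + c)) has_derivative (\<lambda>h. D (Suc n) (x \<bullet> v + c) * (h \<bullet> v))) (at x)"
    for x
  proof -
    have "((\<lambda>p. p \<bullet> v + c) has_derivative (\<lambda>h. h \<bullet> v)) (at x)"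
      by (auto intro!: derivative_eq_intros)
    moreover have "(D n has_derivative (*) (D (Suc n) (x \<bullet> v + c))) (at (x \<bullet> v + c))"
      using assms unfolding derivative_tower_def has_field_derivative_def by blast
    ultimately show ?thesis
      using has_derivative_compose by fastforce
  qed
  then show ?case
    by (rule Ck_SucI) (intro Ck_mult Suc.IH Ck_const)
qed

text \<open>The \<open>n\<close>-th derivative of \<open>exp (- 1 / t)\<close> on \<open>t > 0\<close> is \<open>P\<^sub>n (1 / t) exp (- 1 / t)\<close>,
  where \<open>P\<^sub>n\<^sub>+\<^sub>1 y = y\<^sup>2 (P\<^sub>n y - P\<^sub>n' y)\<close>.\<close>
fun exp_inv_poly :: "nat \<Rightarrow> real poly" where
  "exp_inv_poly 0 = 1"
| "exp_inv_poly (Suc n) = [:0, 0, 1:] * (exp_inv_poly n - pderiv (exp_inv_poly n))"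

definition exp_inv_deriv :: "nat \<Rightarrow> real \<Rightarrow> real" where
  "exp_inv_deriv n t = (if t > 0 then poly (exp_inv_poly n) (inverse t) * exp (- inverse t) else 0)"

lemma tendsto_poly_div_exp_at_top: "((\<lambda>y. poly p y / exp y) \<longlongrightarrow> (0::real)) at_top"
proof -
  have "((\<lambda>y. \<Sum>i\<le>degree p. coeff p i * (y ^ i / exp y)) \<longlongrightarrow> 0) at_top"
    by (intro tendsto_null_sum tendsto_mult_right_zero tendsto_power_div_exp_0)
  then show ?thesis
    by (simp add: poly_altdef sum_divide_distrib)
qed

lemma exp_inv_deriv_has_derivative_pos:
  assumes "t > 0"
  shows "(exp_inv_deriv n has_real_derivative exp_inv_deriv (Suc n) t) (at t)"
proof -
  let ?P = "exp_inv_poly n"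
  have "((\<lambda>s. poly ?P (inverse s)) has_real_derivative
      poly (pderiv ?P) (inverse t) * (- (inverse t ^ Suc (Suc 0)))) (at t)"
    using assms by (intro DERIV_chain2[OF poly_DERIV DERIV_inverse]) auto
  moreover have "((\<lambda>s. exp (- inverse s)) has_real_derivative
      exp (- inverse t) * (- (- (inverse t ^ Suc (Suc 0))))) (at t)"
    using assms by (intro DERIV_chain2[OF DERIV_exp] DERIV_minus DERIV_inverse) auto
  ultimately have "((\<lambda>s. poly ?P (inverse s) * exp (- inverse s)) has_real_derivative
      poly (pderiv ?P) (inverse t) * (- (inverse t ^ Suc (Suc 0))) * exp (- inverse t)
      + exp (- inverse t) * (- (- (inverse t ^ Suc (Suc 0)))) * poly ?P (inverse t)) (at t)"
    by (rule DERIV_mult)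
  also have "poly (pderiv ?P) (inverse t) * (- (inverse t ^ Suc (Suc 0))) * exp (- inverse t)
      + exp (- inverse t) * (- (- (inverse t ^ Suc (Suc 0)))) * poly ?P (inverse t) = exp_inv_deriv (Suc n) t"
    using assms by (simp add: exp_inv_deriv_def algebra_simps power2_eq_square)
  finally show ?thesis
    by (rule has_field_derivative_transform_within_open[where S = "{0<..}"])
      (use assms in \<open>auto simp: exp_inv_deriv_def\<close>)
qed

lemma exp_inv_deriv_has_derivative_0:
  "(exp_inv_deriv n has_real_derivative exp_inv_deriv (Suc n) 0) (at 0)"
proof -
  let ?q = "\<lambda>y. (exp_inv_deriv n y - exp_inv_deriv n 0) / (y - 0)"
  have "(?q \<longlongrightarrow> 0) (at_left 0)"
    by (rule Lim_transform_eventually[OF tendsto_const])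
      (auto simp: eventually_at_left_field exp_inv_deriv_def intro!: exI[of _ "-1"])
  moreover have "(?q \<longlongrightarrow> 0) (at_right 0)"
  proof (rule Lim_transform_eventually)
    show "((\<lambda>y. poly ([:0, 1:] * exp_inv_poly n) (inverse y) / exp (inverse y)) \<longlongrightarrow> 0) (at_right 0)"
      by (rule filterlim_compose[OF tendsto_poly_div_exp_at_top filterlim_inverse_at_top_right])
    show "\<forall>\<^sub>F y in at_right 0. poly ([:0, 1:] * exp_inv_poly n) (inverse y) / exp (inverse y) = ?q y"
      by (auto simp: eventually_at_right_field exp_inv_deriv_def exp_minus field_simps
          intro!: exI[of _ 1])
  qed
  ultimately have "(?q \<longlongrightarrow> 0) (at 0)"
    by (rule filterlim_split_at)
  then show ?thesis
    by (simp add: has_field_derivative_iff exp_inv_deriv_def)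
qed

lemma derivative_tower_exp_inv_deriv: "derivative_tower exp_inv_deriv"
  unfolding derivative_tower_def
proof (intro allI)
  fix n and t :: real
  consider (pos) "t > 0" | (neg) "t < 0" | (zero) "t = 0"
    by linarith
  then show "(exp_inv_deriv n has_real_derivative exp_inv_deriv (Suc n) t) (at t)"
  proof cases
    case neg
    have "((\<lambda>_. 0) has_real_derivative exp_inv_deriv (Suc n) t) (at t)"
      using neg by (simp add: exp_inv_deriv_def)
    then show ?thesis
      by (rule has_field_derivative_transform_within_open[where S = "{..<0}"])
        (use neg in \<open>auto simp: exp_inv_deriv_def\<close>)
  qed (auto intro: exp_inv_deriv_has_derivative_pos exp_inv_deriv_has_derivative_0)
qed

lemma exp_inv_deriv_0: "exp_inv_deriv 0 t = (if t > 0 then exp (- inverse t) else 0)"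
  by (simp add: exp_inv_deriv_def)

lemma tendsto_exp_inv_deriv_0:
  assumes "c > 0"
  shows "(\<lambda>n. exp_inv_deriv 0 (real n * c)) \<longlonglongrightarrow> 1"
proof (rule Lim_transform_eventually)
  show "(\<lambda>n. exp (- (inverse c * inverse (real n)))) \<longlonglongrightarrow> 1"
    using tendsto_exp[OF tendsto_minus[OF tendsto_mult[OF tendsto_const lim_inverse_n]], of "inverse c"]
    by simp
  show "\<forall>\<^sub>F n in sequentially. exp (- (inverse c * inverse (real n))) = exp_inv_deriv 0 (real n * c)"
    using assms by (auto simp: eventually_sequentially exp_inv_deriv_0 mult.commute intro!: exI[of _ 1])
qed

definition bump :: "nat \<Rightarrow> 'a::euclidean_space \<Rightarrow> 'a \<Rightarrow> 'a \<Rightarrow> real" where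
  "bump n a b p = (\<Prod>k\<in>Basis. exp_inv_deriv 0 (real n * (p \<bullet> k - a \<bullet> k))
                             * exp_inv_deriv 0 (real n * (b \<bullet> k - p \<bullet> k)))"

lemma Cinf_bump: "Cinf (bump n a b)"
proof -
  have eq: "bump n a b = (\<lambda>p. \<Prod>k\<in>Basis. exp_inv_deriv 0 (p \<bullet> (real n *\<^sub>R k) + - real n * (a \<bullet> k))
                             * exp_inv_deriv 0 (p \<bullet> (- real n *\<^sub>R k) + real n * (b \<bullet> k)))"
    by (simp add: fun_eq_iff bump_def algebra_simps)
  show ?thesis
    unfolding Cinf_def eq
    by (intro allI Ck_prod Ck_mult finite_Basis Ck_compose_affine derivative_tower_exp_inv_deriv)
qed

lemma exp_inv_deriv_0_nonneg: "0 \<le> exp_inv_deriv 0 t"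
  and exp_inv_deriv_0_le_1: "exp_inv_deriv 0 t \<le> 1"
  by (auto simp: exp_inv_deriv_0)

lemma bump_nonneg: "0 \<le> bump n a b p"
  and bump_le_1: "bump n a b p \<le> 1"
  by (auto simp: bump_def exp_inv_deriv_0_nonneg exp_inv_deriv_0_le_1
      intro!: prod_nonneg prod_le_1 mult_le_one)

lemma bump_nonzero_imp_box: "bump n a b p \<noteq> 0 \<Longrightarrow> p \<in> box a b"
  by (auto simp: bump_def mem_box exp_inv_deriv_0 zero_less_mult_iff split: if_splits)

lemma tendsto_bump: "p \<in> box a b \<Longrightarrow> (\<lambda>n. bump n a b p) \<longlonglongrightarrow> 1"
  using tendsto_prod[of Basis "\<lambda>k n. exp_inv_deriv 0 (real n * (p \<bullet> k - a \<bullet> k))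
                             * exp_inv_deriv 0 (real n * (b \<bullet> k - p \<bullet> k))" "\<lambda>_. 1" sequentially]
  by (auto simp: bump_def[abs_def] mem_box intro!: tendsto_eq_intros tendsto_exp_inv_deriv_0)

lemma open_eq_Union_box_seq:
  fixes U :: "'a::euclidean_space set"
  assumes "open U" "U \<noteq> {}"
  obtains a b :: "nat \<Rightarrow> 'a" where "\<And>j. cbox (a j) (b j) \<subseteq> U" "U = (\<Union>j. box (a j) (b j))"
proof -
  define P where "P = {(a, b). cbox a b \<subseteq> U}"
  have "U = \<Union>((\<lambda>(a, b). box a b) ` P)"
  proof
    show "U \<subseteq> \<Union>((\<lambda>(a, b). box a b) ` P)"
    proof
      fix x assume "x \<in> U"
      then obtain a b where "cbox a b \<subseteq> U" "x \<in> box a b"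
        using open_contains_cbox[OF \<open>open U\<close>] by metis
      then show "x \<in> \<Union>((\<lambda>(a, b). box a b) ` P)"
        unfolding P_def by blast
    qed
    show "\<Union>((\<lambda>(a, b). box a b) ` P) \<subseteq> U"
      using box_subset_cbox unfolding P_def by blast
  qed
  moreover obtain F where "F \<subseteq> (\<lambda>(a, b). box a b) ` P" "countable F" "\<Union>F = \<Union>((\<lambda>(a, b). box a b) ` P)"
    by (rule Lindelof[of "(\<lambda>(a, b). box a b) ` P"]) auto
  ultimately obtain P' where P': "countable P'" "P' \<subseteq> P" "U = \<Union>((\<lambda>(a, b). box a b) ` P')"
    using countable_subset_image by metis
  then have "P' \<noteq> {}"
    using assms(2) by auto
  define a where "a j = fst (from_nat_into P' j)" for j
  define b where "b j = snd (from_nat_into P' j)" for j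
  have "range (\<lambda>j. (a j, b j)) = P'"
    using range_from_nat_into[OF \<open>P' \<noteq> {}\<close> \<open>countable P'\<close>] by (simp add: a_def b_def)
  then show ?thesis
    using P' by (intro that[of a b]) (auto simp: P_def)
qed

lemma prod_one_minus_bump_outside:
  assumes "\<And>j. j < n \<Longrightarrow> p \<notin> box (a j) (b j)"
  shows "(\<Prod>j<n. 1 - bump n (a j) (b j) p) = 1"
proof -
  have "bump n (a j) (b j) p = 0" if "j < n" for j
    using bump_nonzero_imp_box assms that by blast
  then show ?thesis
    by simp
qed

lemma tendsto_prod_one_minus_bump:
  assumes "p \<in> box (a j0) (b j0)"
  shows "(\<lambda>n. \<Prod>j<n. 1 - bump n (a j) (b j) p) \<longlonglongrightarrow> 0"
proof (rule tendsto_sandwich[OF _ _ tendsto_const])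
  show "\<forall>\<^sub>F n in sequentially. 0 \<le> (\<Prod>j<n. 1 - bump n (a j) (b j) p)"
    by (simp add: bump_le_1 prod_nonneg)
  have "(\<Prod>j<n. 1 - bump n (a j) (b j) p) \<le> 1 - bump n (a j0) (b j0) p" if "n > j0" for n
  proof -
    have "(\<Prod>j<n. 1 - bump n (a j) (b j) p) =
        (1 - bump n (a j0) (b j0) p) * (\<Prod>j\<in>{..<n} - {j0}. 1 - bump n (a j) (b j) p)"
      using that by (subst prod.remove[of _ j0]) auto
    also have "\<dots> \<le> (1 - bump n (a j0) (b j0) p) * 1"
      by (intro mult_left_mono prod_le_1) (auto simp: bump_nonneg bump_le_1)
    finally show ?thesis
      by simp
  qed
  then show "\<forall>\<^sub>F n in sequentially. (\<Prod>j<n. 1 - bump n (a j) (b j) p) \<le> 1 - bump n (a j0) (b j0) p"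
    unfolding eventually_sequentially by (intro exI[of _ "Suc j0"]) auto
  show "(\<lambda>n. 1 - bump n (a j0) (b j0) p) \<longlonglongrightarrow> 0"
    using tendsto_diff[OF tendsto_const tendsto_bump[OF assms], of 1] by simp
qed

lemma smooth_approx_indicator_open:
  fixes U :: "'a::euclidean_space set"
  assumes "open U"
  obtains \<phi> :: "nat \<Rightarrow> 'a \<Rightarrow> real" where
    "\<And>n. Cinf (\<phi> n)" "\<And>n p. 0 \<le> \<phi> n p" "\<And>n p. \<phi> n p \<le> 1"
    "\<And>n. \<exists>C. compact C \<and> C \<subseteq> U \<and> {p. \<phi> n p \<noteq> 0} \<subseteq> C"
    "\<And>p. (\<lambda>n. \<phi> n p) \<longlonglongrightarrow> indicator U p"
proof (cases "U = {}")
  case True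
  show ?thesis
    by (rule that[of "\<lambda>_ _. 0"]) (auto simp: Cinf_def Ck_const True)
next
  case False
  obtain a b :: "nat \<Rightarrow> 'a" where ab: "\<And>j. cbox (a j) (b j) \<subseteq> U" "U = (\<Union>j. box (a j) (b j))"
    using open_eq_Union_box_seq[OF assms False] by blast
  define \<pi> where "\<pi> n p = (\<Prod>j<n. 1 - bump n (a j) (b j) p)" for n p
  have "0 \<le> \<pi> n p" "\<pi> n p \<le> 1" for n p
    by (auto simp: \<pi>_def bump_nonneg bump_le_1 intro!: prod_nonneg prod_le_1)
  then show ?thesis
  proof (intro that[of "\<lambda>n p. 1 - \<pi> n p"])
    show "Cinf (\<lambda>p. 1 - \<pi> n p)" for n
      using Cinf_bump unfolding Cinf_def \<pi>_def by (auto intro!: Ck_diff Ck_prod Ck_const)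
    show "\<exists>C. compact C \<and> C \<subseteq> U \<and> {p. 1 - \<pi> n p \<noteq> 0} \<subseteq> C" for n
    proof (intro exI conjI)
      show "compact (\<Union>j<n. cbox (a j) (b j))" "(\<Union>j<n. cbox (a j) (b j)) \<subseteq> U"
        using ab(1) by auto
      have "\<pi> n p = 1" if "\<forall>j<n. p \<notin> box (a j) (b j)" for p
        unfolding \<pi>_def using that by (intro prod_one_minus_bump_outside) auto
      then show "{p. 1 - \<pi> n p \<noteq> 0} \<subseteq> (\<Union>j<n. cbox (a j) (b j))"
        using box_subset_cbox by fastforce
    qed
    show "(\<lambda>n. 1 - \<pi> n p) \<longlonglongrightarrow> indicator U p" for p
    proof (cases "p \<in> U")
      case True
      then obtain j0 where "p \<in> box (a j0) (b j0)"
        using ab(2) by blast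
      then have "(\<lambda>n. 1 - \<pi> n p) \<longlonglongrightarrow> 1 - 0"
        unfolding \<pi>_def by (intro tendsto_diff tendsto_const tendsto_prod_one_minus_bump)
      then show ?thesis
        using True by simp
    next
      case False
      then have "\<pi> n p = 1" for n
        unfolding \<pi>_def using ab(2) by (intro prod_one_minus_bump_outside) auto
      then show ?thesis
        using False by simp
    qed
  qed auto
qed

section \<open>Geodesic distance on the circle\<close>

lemma phase_cis:
  assumes "norm z = 1"
  shows "0 \<le> phase z" "phase z < 2 * pi" "z = cis (phase z)"
proof -
  have "z \<noteq> 0"
    using assms by auto
  then have z: "z = cis (Arg z)"
    using cis_Arg[of z] assms by (simp add: sgn_div_norm)
  have "\<exists>\<phi>. 0 \<le> \<phi> \<and> \<phi> < 2 * pi \<and> z = cis \<phi>"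
  proof (cases "Arg z \<ge> 0")
    case True
    then show ?thesis
      using Arg_bounded[of z] z by (intro exI[of _ "Arg z"]) auto
  next
    case False
    have "cis (Arg z + 2 * pi) = cis (Arg z)"
      by (simp add: cis_mult[symmetric])
    then show ?thesis
      using Arg_bounded[of z] z False by (intro exI[of _ "Arg z + 2 * pi"]) auto
  qed
  then show "0 \<le> phase z" "phase z < 2 * pi" "z = cis (phase z)"
    unfolding phase_def by (metis (mono_tags, lifting) someI_ex)+
qed

lemma twopiZ_bracket:
  fixes t :: real
  obtains q where "q \<in> twopiZ" "q + 2 * pi \<in> twopiZ" "q \<le> t" "t < q + 2 * pi"
    "\<And>p. p \<in> twopiZ \<Longrightarrow> p \<le> q \<or> q + 2 * pi \<le> p"
proof
  define k where "k = \<lfloor>t / (2 * pi)\<rfloor>"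
  show "2 * pi * of_int k \<in> twopiZ"
    unfolding twopiZ_def by blast
  show "2 * pi * of_int k + 2 * pi \<in> twopiZ"
    unfolding twopiZ_def by (rule CollectI, rule exI[of _ "k + 1"]) (simp add: algebra_simps)
  have "of_int k \<le> t / (2 * pi)" "t / (2 * pi) < of_int k + 1"
    unfolding k_def by linarith+
  then show "2 * pi * of_int k \<le> t" "t < 2 * pi * of_int k + 2 * pi"
    using pi_gt_zero by (auto simp: field_simps)
  fix p assume "p \<in> twopiZ"
  then obtain j where j: "p = 2 * pi * of_int j"
    unfolding twopiZ_def by blast
  have "j \<le> k \<or> k + 1 \<le> j"
    by linarith
  then have "2 * pi * of_int j \<le> 2 * pi * of_int k \<or> 2 * pi * of_int (k + 1) \<le> 2 * pi * (of_int j :: real)"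
    using pi_ge_zero by (metis of_int_le_iff mult_left_mono mult_nonneg_nonneg zero_le_numeral)
  then show "p \<le> 2 * pi * of_int k \<or> 2 * pi * of_int k + 2 * pi \<le> p"
    unfolding j by (simp add: algebra_simps)
qed

lemma Qn_spec:
  "Qn t \<in> twopiZ \<and> (\<forall>p\<in>twopiZ. \<bar>t - Qn t\<bar> \<le> \<bar>t - p\<bar>) \<and>
     (\<forall>p\<in>twopiZ. \<bar>t - p\<bar> = \<bar>t - Qn t\<bar> \<longrightarrow> \<bar>Qn t\<bar> \<le> \<bar>p\<bar>)"
proof -
  obtain q1 where q1: "q1 \<in> twopiZ" "q1 + 2 * pi \<in> twopiZ" "q1 \<le> t" "t < q1 + 2 * pi"
    and outside: "\<And>p. p \<in> twopiZ \<Longrightarrow> p \<le> q1 \<or> q1 + 2 * pi \<le> p"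
    using twopiZ_bracket[of t] by blast
  define q2 where "q2 = q1 + 2 * pi"
  define q where "q = (if \<bar>t - q1\<bar> < \<bar>t - q2\<bar> \<or> (\<bar>t - q1\<bar> = \<bar>t - q2\<bar> \<and> \<bar>q1\<bar> \<le> \<bar>q2\<bar>) then q1 else q2)"
  have "q \<in> twopiZ \<and> (\<forall>p\<in>twopiZ. \<bar>t - q\<bar> \<le> \<bar>t - p\<bar>) \<and>
     (\<forall>p\<in>twopiZ. \<bar>t - p\<bar> = \<bar>t - q\<bar> \<longrightarrow> \<bar>q\<bar> \<le> \<bar>p\<bar>)"
  proof (intro conjI ballI impI)
    show "q \<in> twopiZ"
      using q1 by (simp add: q_def q2_def)
    fix p assume "p \<in> twopiZ"
    then have p: "p \<le> q1 \<or> q2 \<le> p"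
      unfolding q2_def by (rule outside)
    then show "\<bar>t - q\<bar> \<le> \<bar>t - p\<bar>"
      using q1(3,4) unfolding q_def q2_def by auto
    assume "\<bar>t - p\<bar> = \<bar>t - q\<bar>"
    then have "p = q1 \<or> p = q2"
      using p q1(3,4) unfolding q_def q2_def by (auto split: if_splits)
    then show "\<bar>q\<bar> \<le> \<bar>p\<bar>"
      using \<open>\<bar>t - p\<bar> = \<bar>t - q\<bar>\<close> unfolding q_def by auto
  qed
  then show ?thesis
    unfolding Qn_def by (rule someI)
qed

lemma Psi_abs_le: "\<bar>Psi t\<bar> \<le> pi"
proof -
  obtain q where "q \<in> twopiZ" "q + 2 * pi \<in> twopiZ" "q \<le> t" "t < q + 2 * pi"
    by (rule twopiZ_bracket[of t])
  moreover from this(1,2) have "\<bar>t - Qn t\<bar> \<le> \<bar>t - q\<bar>" "\<bar>t - Qn t\<bar> \<le> \<bar>t - (q + 2 * pi)\<bar>"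
    using Qn_spec[of t] by blast+
  ultimately show ?thesis
    unfolding Psi_def by linarith
qed

lemma cos_Psi: "cos (Psi t) = cos t"
proof -
  obtain k :: int where "Qn t = 2 * pi * of_int k"
    using Qn_spec[of t] unfolding twopiZ_def by blast
  then show ?thesis
    by (simp add: Psi_def cos_diff)
qed

lemma arccos_cos_abs: "\<bar>x\<bar> \<le> pi \<Longrightarrow> arccos (cos x) = \<bar>x\<bar>"
  by (cases "x \<ge> 0") (auto simp: arccos_cos, metis abs_ge_zero abs_of_neg arccos_cos cos_minus not_le)

lemma dS1_eq_abs_Psi:
  assumes "norm z = 1" "norm w = 1"
  shows "dS1 z w = \<bar>Psi (phase w - phase z)\<bar>"
proof -
  have "cnj z * w = cis (phase w - phase z)"
    using phase_cis(3)[OF assms(1)] phase_cis(3)[OF assms(2)]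
    by (metis cis_cnj cis_mult diff_conv_add_uminus mult.commute)
  then have "Re (cnj z * w) = cos (Psi (phase w - phase z))"
    by (simp add: cos_Psi)
  then show ?thesis
    unfolding dS1_def using Psi_abs_le arccos_cos_abs by simp
qed

lemma norm_Sset: "z \<in> Sset N \<Longrightarrow> norm z = 1"
  unfolding Sset_def by (auto simp del: of_real_mult)

section \<open>Signed set functions and push-forward integrals\<close>

definition signed_countably_additive :: "'a measure \<Rightarrow> ('a set \<Rightarrow> real) \<Rightarrow> bool" where
  "signed_countably_additive M L \<longleftrightarrow>
     (\<forall>A. disjoint_family A \<longrightarrow> range A \<subseteq> sets M \<longrightarrow> (\<lambda>n. L (A n)) sums L (\<Union>n. A n))"

lemma signed_countably_additive_empty:
  assumes "signed_countably_additive M L"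
  shows "L {} = 0"
proof -
  have "disjoint_family (\<lambda>_::nat. {})" "range (\<lambda>_::nat. {}) \<subseteq> sets M"
    by (auto simp: disjoint_family_on_def)
  from assms[unfolded signed_countably_additive_def, rule_format, OF this]
  have "(\<lambda>n. L {}) sums L {}"
    by simp
  then have "(\<lambda>n. L {}) \<longlonglongrightarrow> 0"
    using summable_LIMSEQ_zero sums_summable by blast
  then show ?thesis
    by (simp add: LIMSEQ_const_iff)
qed

lemma signed_countably_additive_Un:
  assumes "signed_countably_additive M L" "A \<in> sets M" "B \<in> sets M" "A \<inter> B = {}"
  shows "L (A \<union> B) = L A + L B"
proof -
  have "disjoint_family (binaryset A B)"
    using assms(4) by (auto simp: disjoint_family_on_def binaryset_def)
  moreover have "range (binaryset A B) \<subseteq> sets M"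
    using assms(2,3) by (simp add: range_binaryset_eq)
  ultimately have "(\<lambda>n. L (binaryset A B n)) sums L (\<Union>n. binaryset A B n)"
    using assms(1) unfolding signed_countably_additive_def by blast
  moreover have "(\<lambda>n. L (binaryset A B n)) sums (L A + L B)"
    by (rule binaryset_sums[of L, OF signed_countably_additive_empty[OF assms(1)]])
  ultimately show ?thesis
    by (simp add: UN_binaryset_eq sums_unique2)
qed

lemma sigma_sets_open_subsets:
  fixes V :: "'a::topological_space set"
  assumes "open V"
  shows "sigma_sets V {U. open U \<and> U \<subseteq> V} = {B \<in> sets borel. B \<subseteq> V}"
proof -
  have "(\<inter>) V ` {S. open S} = {U. open U \<and> U \<subseteq> V}"
  proof
    show "(\<inter>) V ` {S. open S} \<subseteq> {U. open U \<and> U \<subseteq> V}"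
      using assms by auto
    show "{U. open U \<and> U \<subseteq> V} \<subseteq> (\<inter>) V ` {S. open S}"
    proof
      fix U assume "U \<in> {U. open U \<and> U \<subseteq> V}"
      then show "U \<in> (\<inter>) V ` {S. open S}"
        by (intro image_eqI[of U _ U]) auto
    qed
  qed
  moreover have "V \<in> sigma_sets UNIV {S. open S}"
    using assms by auto
  ultimately have "sigma_sets V {U. open U \<and> U \<subseteq> V} = (\<inter>) V ` sets borel"
    using sigma_sets_Int[of V UNIV "{S. open S}"] by (simp add: sets_borel)
  also have "\<dots> = {B \<in> sets borel. B \<subseteq> V}"
  proof
    show "(\<inter>) V ` sets borel \<subseteq> {B \<in> sets borel. B \<subseteq> V}"
      using assms by auto
    show "{B \<in> sets borel. B \<subseteq> V} \<subseteq> (\<inter>) V ` sets borel"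
    proof
      fix B assume "B \<in> {B \<in> sets borel. B \<subseteq> V}"
      then show "B \<in> (\<inter>) V ` sets borel"
        by (intro image_eqI[of B _ B]) auto
    qed
  qed
  finally show ?thesis .
qed

lemma signed_countably_additive_eq_on_open_imp_borel:
  fixes L1 L2 :: "'a::topological_space set \<Rightarrow> real"
  assumes "signed_countably_additive borel L1" "signed_countably_additive borel L2"
    and "open V" and agree: "\<And>U. open U \<Longrightarrow> U \<subseteq> V \<Longrightarrow> L1 U = L2 U"
    and "B \<in> sets borel" "B \<subseteq> V"
  shows "L1 B = L2 B"
proof -
  let ?G = "{U. open U \<and> U \<subseteq> V}"
  have B: "B \<in> sigma_sets V ?G"
    using assms by (simp add: sigma_sets_open_subsets)
  have "Int_stable ?G" "?G \<subseteq> Pow V"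
    by (auto simp: Int_stable_def)
  from this B show ?thesis
  proof (induction B rule: sigma_sets_induct_disjoint)
    case (basic A)
    then show ?case
      by (simp add: agree)
  next
    case empty
    then show ?case
      using assms(1,2) by (simp add: signed_countably_additive_empty)
  next
    case (compl A)
    then have "A \<in> sets borel" "A \<subseteq> V"
      using \<open>open V\<close> by (simp_all add: sigma_sets_open_subsets)
    then have "L V = L A + L (V - A)" if "signed_countably_additive borel L" for L
      using signed_countably_additive_Un[OF that, of A "V - A"] \<open>open V\<close> by (simp add: Un_absorb1)
    from this[OF assms(1)] this[OF assms(2)] show ?case
      using agree[OF \<open>open V\<close> order_refl] compl.IH by simp
  next
    case (union A)
    then have "range A \<subseteq> sets borel"
      using \<open>open V\<close> by (auto simp: sigma_sets_open_subsets)
    then have "(\<lambda>n. L (A n)) sums L (\<Union>n. A n)" if "signed_countably_additive borel L" for L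
      using that union.hyps(1) unfolding signed_countably_additive_def by blast
    from this[OF assms(1)] this[OF assms(2)] show ?case
      using union.IH by (simp add: sums_unique2)
  qed
qed

text \<open>\<open>push_integral M F h f\<close> is \<open>\<integral> f d(F\<^sub>#(h M))\<close>.\<close>
definition push_integral :: "'m measure \<Rightarrow> ('m \<Rightarrow> 'b) \<Rightarrow> ('m \<Rightarrow> real) \<Rightarrow> ('b \<Rightarrow> real) \<Rightarrow> real" where
  "push_integral M F h f = (\<integral>x. f (F x) * h x \<partial>M)"

lemma integrable_push_integrand:
  fixes f :: "'b::topological_space \<Rightarrow> real"
  assumes "integrable M h" "F \<in> M \<rightarrow>\<^sub>M borel" "f \<in> borel_measurable borel" "\<And>y. \<bar>f y\<bar> \<le> 1"
  shows "integrable M (\<lambda>x. f (F x) * h x)"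
proof (rule Bochner_Integration.integrable_bound[OF assms(1)])
  show "(\<lambda>x. f (F x) * h x) \<in> borel_measurable M"
    using assms(1-3) by measurable
  show "AE x in M. norm (f (F x) * h x) \<le> norm (h x)"
    using assms(4) by (auto simp: abs_mult intro!: mult_left_le_one_le)
qed

lemma tendsto_push_integral:
  fixes f :: "nat \<Rightarrow> 'b::topological_space \<Rightarrow> real"
  assumes "integrable M h" "F \<in> M \<rightarrow>\<^sub>M borel"
    and "\<And>n. f n \<in> borel_measurable borel" "g \<in> borel_measurable borel"
    and "\<And>n y. \<bar>f n y\<bar> \<le> 1" "\<And>y. (\<lambda>n. f n y) \<longlonglongrightarrow> g y"
  shows "(\<lambda>n. push_integral M F h (f n)) \<longlonglongrightarrow> push_integral M F h g"
  unfolding push_integral_def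
proof (rule integral_dominated_convergence[where w = "\<lambda>x. \<bar>h x\<bar>"])
  show "(\<lambda>x. g (F x) * h x) \<in> borel_measurable M" "(\<lambda>x. f n (F x) * h x) \<in> borel_measurable M" for n
    using assms(1-4) by measurable
  show "integrable M (\<lambda>x. \<bar>h x\<bar>)"
    using assms(1) by auto
  show "AE x in M. (\<lambda>n. f n (F x) * h x) \<longlonglongrightarrow> g (F x) * h x"
    using assms(6) by (auto intro!: tendsto_mult tendsto_const)
  show "AE x in M. norm (f n (F x) * h x) \<le> \<bar>h x\<bar>" for n
    using assms(5) by (auto simp: abs_mult intro!: mult_left_le_one_le)
qed

lemma signed_countably_additive_push_integral:
  fixes F :: "'m \<Rightarrow> 'b::topological_space"
  assumes "integrable M h" "F \<in> M \<rightarrow>\<^sub>M borel"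
  shows "signed_countably_additive borel (\<lambda>B. push_integral M F h (indicator B))"
  unfolding signed_countably_additive_def
proof (intro allI impI)
  fix A :: "nat \<Rightarrow> 'b set"
  assume A: "disjoint_family A" "range A \<subseteq> sets borel"
  have "(\<Sum>n<N. push_integral M F h (indicator (A n))) = push_integral M F h (indicator (\<Union>n<N. A n))"
    for N
  proof -
    have "indicator (\<Union>n<N. A n) y = (\<Sum>n<N. indicator (A n) y :: real)" for y
      using indicator_UN_disjoint[of "{..<N}" A y] A(1) by (simp add: disjoint_family_on_def)
    moreover have "integrable M (\<lambda>x. indicator (A n) (F x) * h x)" for n
      using A(2) by (intro integrable_push_integrand[OF assms]) auto
    ultimately show ?thesis
      unfolding push_integral_def
      by (simp add: sum_distrib_right flip: Bochner_Integration.integral_sum)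
  qed
  moreover have "(\<lambda>N. push_integral M F h (indicator (\<Union>n<N. A n))) \<longlonglongrightarrow>
      push_integral M F h (indicator (\<Union>n. A n))"
    using A(2) by (intro tendsto_push_integral[OF assms] LIMSEQ_indicator_UN borel_measurable_indicator)
      (auto simp: abs_indicator)
  ultimately show "(\<lambda>n. push_integral M F h (indicator (A n))) sums push_integral M F h (indicator (\<Union>n. A n))"
    by (simp add: sums_def)
qed

section \<open>The current on a single component\<close>

definition single_form :: "f2 \<Rightarrow> (complex \<times> complex \<Rightarrow> real) \<Rightarrow> form2" where
  "single_form I \<phi> = (\<lambda>J. if J = I then \<phi> else (\<lambda>_. 0))"

definition edge_jump :: "real \<Rightarrow> (complex \<Rightarrow> complex) \<Rightarrow> (int \<times> int) \<times> nat \<Rightarrow> real" where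
  "edge_jump \<epsilon> u e = Psi (phase (u (Lpt \<epsilon> (fst e + evec (snd e)))) - phase (u (Lpt \<epsilon> (fst e))))"

definition edge_orientation :: "real \<Rightarrow> (complex \<Rightarrow> complex) \<Rightarrow> (int \<times> int) \<times> nat \<Rightarrow> real" where
  "edge_orientation \<epsilon> u e = (if 0 \<le> edge_jump \<epsilon> u e then 1 else -1)"

definition edge_arc :: "real \<Rightarrow> (complex \<Rightarrow> complex) \<Rightarrow> (int \<times> int) \<times> nat \<Rightarrow> real set" where
  "edge_arc \<epsilon> u e = closed_segment (phase (u (Lpt \<epsilon> (fst e)))) (phase (u (Lpt \<epsilon> (fst e))) + edge_jump \<epsilon> u e)"

text \<open>\<open>edge_chart \<epsilon> e\<close> maps the rectangle \<open>edge_box \<epsilon> u e\<close> onto the product of the edge \<open>e\<close> with the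
  geodesic arc between the traces of \<open>u\<close> on its two sides, the second coordinate being the phase.\<close>
definition edge_box :: "real \<Rightarrow> (complex \<Rightarrow> complex) \<Rightarrow> (int \<times> int) \<times> nat \<Rightarrow> (real \<times> real) set" where
  "edge_box \<epsilon> u e = {0..1} \<times> edge_arc \<epsilon> u e"

definition edge_chart :: "real \<Rightarrow> (int \<times> int) \<times> nat \<Rightarrow> real \<times> real \<Rightarrow> complex \<times> complex" where
  "edge_chart \<epsilon> e x = (edgept \<epsilon> (fst e) (snd e) (fst x), cis (snd x))"

definition dy_pullback :: "nat \<Rightarrow> real \<Rightarrow> real" where
  "dy_pullback m t = (if m = 1 then - sin t else cos t)"

definition edge_density :: "real \<Rightarrow> (complex \<Rightarrow> complex) \<Rightarrow> nat \<Rightarrow> (int \<times> int) \<times> nat \<Rightarrow> real \<times> real \<Rightarrow> real" where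
  "edge_density \<epsilon> u m e x = indicator (edge_box \<epsilon> u e) x * dy_pullback m (snd x)"

definition edge_weight :: "real \<Rightarrow> (complex \<Rightarrow> complex) \<Rightarrow> nat \<Rightarrow> (int \<times> int) \<times> nat \<Rightarrow> real" where
  "edge_weight \<epsilon> u l e = (if snd e = l then \<epsilon> * (-1) ^ (2 - l) * edge_orientation \<epsilon> u e else 0)"

definition jump_functional ::
    "real \<Rightarrow> complex set \<Rightarrow> (complex \<Rightarrow> complex) \<Rightarrow> nat \<Rightarrow> nat \<Rightarrow> (complex \<times> complex \<Rightarrow> real) \<Rightarrow> real" where
  "jump_functional \<epsilon> \<Omega> u l m f =
     (\<Sum>e\<in>edges \<epsilon> \<Omega>. edge_weight \<epsilon> u l e * push_integral lborel (edge_chart \<epsilon> e) (edge_density \<epsilon> u m e) f)"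

lemma continuous_on_dy_pullback: "continuous_on S (dy_pullback m)"
  unfolding dy_pullback_def by (cases "m = 1") (auto intro!: continuous_intros)

lemma edge_arc_cbox:
  obtains lo hi where "edge_arc \<epsilon> u e = cbox lo hi" "hi - lo = \<bar>edge_jump \<epsilon> u e\<bar>"
proof -
  let ?a = "phase (u (Lpt \<epsilon> (fst e)))" and ?\<psi> = "edge_jump \<epsilon> u e"
  show ?thesis
  proof (cases "0 \<le> ?\<psi>")
    case True
    then show ?thesis
      by (intro that[of ?a "?a + ?\<psi>"]) (simp_all add: edge_arc_def closed_segment_eq_real_ivl cbox_interval)
  next
    case False
    then show ?thesis
      by (intro that[of "?a + ?\<psi>" ?a]) (simp_all add: edge_arc_def closed_segment_eq_real_ivl cbox_interval)
  qed
qed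

lemma edge_box_cbox:
  obtains lo hi where "edge_box \<epsilon> u e = cbox (0, lo) (1, hi)" "edge_arc \<epsilon> u e = cbox lo hi"
    "hi - lo = \<bar>edge_jump \<epsilon> u e\<bar>"
proof -
  obtain lo hi where "edge_arc \<epsilon> u e = cbox lo hi" "hi - lo = \<bar>edge_jump \<epsilon> u e\<bar>"
    by (rule edge_arc_cbox)
  moreover have "{0..1::real} = cbox 0 1"
    by (simp add: cbox_interval)
  ultimately show ?thesis
    by (intro that[of lo hi]) (simp_all add: edge_box_def cbox_Pair_eq)
qed

lemma continuous_on_edgept: "continuous_on S (edgept \<epsilon> i l)"
  unfolding edgept_def[abs_def] by (cases "l = 1") (auto intro!: continuous_intros)

lemma continuous_on_edge_chart: "continuous_on S (edge_chart \<epsilon> e)"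
  unfolding edge_chart_def[abs_def]
  by (auto intro!: continuous_intros continuous_on_compose2[OF continuous_on_edgept])

lemma edge_chart_measurable: "edge_chart \<epsilon> e \<in> lborel \<rightarrow>\<^sub>M borel"
  using borel_measurable_continuous_onI[OF continuous_on_edge_chart] by simp

lemma integrable_edge_density: "integrable lborel (edge_density \<epsilon> u m e)"
proof -
  obtain lo hi where box: "edge_box \<epsilon> u e = cbox (0, lo) (1, hi)"
    by (rule edge_box_cbox)
  have "integrable lborel (\<lambda>x. indicator (edge_box \<epsilon> u e) x *\<^sub>R dy_pullback m (snd x))"
    unfolding box
    by (rule borel_integrable_compact)
      (auto intro!: continuous_on_compose2[OF continuous_on_dy_pullback] continuous_intros)
  then show ?thesis
    by (simp add: edge_density_def[abs_def])
qed

lemma measure_edge_box: "measure lborel (edge_box \<epsilon> u e) = \<bar>edge_jump \<epsilon> u e\<bar>"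
proof -
  obtain lo hi where "edge_box \<epsilon> u e = cbox (0, lo) (1, hi)" "hi - lo = \<bar>edge_jump \<epsilon> u e\<bar>"
    by (rule edge_box_cbox)
  then show ?thesis
    by (simp only: content_Pair) (simp add: cbox_interval)
qed

lemma arcint_along_edge:
  "arcint (\<lambda>y. \<phi> (edgept \<epsilon> i l s, y)) (u (Lpt \<epsilon> i)) (u (Lpt \<epsilon> (i + evec l))) m =
   edge_orientation \<epsilon> u (i, l) * integral (edge_arc \<epsilon> u (i, l)) (\<lambda>t. \<phi> (edge_chart \<epsilon> (i, l) (s, t)) * dy_pullback m t)"
  unfolding arcint_def oint_def edge_orientation_def edge_chart_def dy_pullback_def edge_jump_def
    edge_arc_def closed_segment_eq_real_ivl
  by auto

lemma iterated_integral_edge_box: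
  assumes "continuous_on UNIV \<phi>"
  shows "integral {0..1} (\<lambda>s. integral (edge_arc \<epsilon> u e) (\<lambda>t. \<phi> (edge_chart \<epsilon> e (s, t)) * dy_pullback m t))
    = push_integral lborel (edge_chart \<epsilon> e) (edge_density \<epsilon> u m e) \<phi>"
proof -
  let ?g = "\<lambda>x. \<phi> (edge_chart \<epsilon> e x) * dy_pullback m (snd x)"
  obtain lo hi where box: "edge_box \<epsilon> u e = cbox (0, lo) (1, hi)" and arc: "edge_arc \<epsilon> u e = cbox lo hi"
    by (rule edge_box_cbox)
  have cont: "continuous_on UNIV ?g"
    by (auto intro!: continuous_intros continuous_on_compose2[OF assms]
        continuous_on_compose2[OF continuous_on_dy_pullback] continuous_on_edge_chart)
  have "integral {0..1} (\<lambda>s. integral (edge_arc \<epsilon> u e) (\<lambda>t. ?g (s, t))) = integral (edge_box \<epsilon> u e) ?g"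
    unfolding box arc
    by (subst integral_prod_continuous[OF continuous_on_subset[OF cont]]) (auto simp: cbox_interval)
  also have "\<dots> = (LINT x : edge_box \<epsilon> u e | lborel. ?g x)"
  proof -
    have "set_integrable lborel (cbox (0, lo) (1, hi)) ?g"
      unfolding set_integrable_def
      by (rule borel_integrable_compact) (auto intro: continuous_on_subset[OF cont])
    then show ?thesis
      unfolding box by (rule set_borel_integral_eq_integral(2)[symmetric])
  qed
  also have "\<dots> = push_integral lborel (edge_chart \<epsilon> e) (edge_density \<epsilon> u m e) \<phi>"
    unfolding set_lebesgue_integral_def push_integral_def edge_density_def
    by (rule Bochner_Integration.integral_cong) auto
  finally show ?thesis
    by simp
qed

lemma sum_single_form_components:
  assumes "l \<in> {1, 2}" "m \<in> {1, 2}"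
  shows "(\<Sum>l'\<in>{1, 2}. \<Sum>m'\<in>{1, 2}. (-1) ^ (2 - l') *
             arcint (\<lambda>y. single_form (hidx l m) \<phi> (hidx l' m') (p, y)) z w m' * (if l' = l2 then 1 else 0))
       = (if l2 = l then (-1) ^ (2 - l) * arcint (\<lambda>y. \<phi> (p, y)) z w m else (0::real))"
proof -
  have "arcint (\<lambda>y. 0) z w m' = 0" for m'
    by (simp add: arcint_def oint_def)
  moreover have "l = 1 \<or> l = 2" "m = 1 \<or> m = 2"
    using assms by auto
  ultimately show ?thesis
    by (elim disjE) (simp_all add: single_form_def hidx_def)
qed

lemma Gcur_single_form:
  assumes "l \<in> {1, 2}" "m \<in> {1, 2}" "continuous_on UNIV \<phi>"
  shows "Gcur \<epsilon> \<Omega> u (single_form (hidx l m) \<phi>) = jump_functional \<epsilon> \<Omega> u l m \<phi>"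
proof -
  have edge: "\<epsilon> * integral {0..1} (\<lambda>s.
          \<Sum>l'\<in>{1, 2}. \<Sum>m'\<in>{1, 2}. (-1) ^ (2 - l') *
             arcint (\<lambda>y. single_form (hidx l m) \<phi> (hidx l' m') (edgept \<epsilon> i l2 s, y))
               (u (Lpt \<epsilon> i)) (u (Lpt \<epsilon> (i + evec l2))) m' * (if l' = l2 then 1 else 0))
      = edge_weight \<epsilon> u l (i, l2) * push_integral lborel (edge_chart \<epsilon> (i, l2)) (edge_density \<epsilon> u m (i, l2)) \<phi>"
    for i l2
  proof -
    have "\<epsilon> * integral {0..1} (\<lambda>s.
          \<Sum>l'\<in>{1, 2}. \<Sum>m'\<in>{1, 2}. (-1) ^ (2 - l') *
             arcint (\<lambda>y. single_form (hidx l m) \<phi> (hidx l' m') (edgept \<epsilon> i l2 s, y))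
               (u (Lpt \<epsilon> i)) (u (Lpt \<epsilon> (i + evec l2))) m' * (if l' = l2 then 1 else 0))
      = \<epsilon> * integral {0..1} (\<lambda>s. (if l2 = l then (-1) ^ (2 - l) * edge_orientation \<epsilon> u (i, l2) else 0) *
          integral (edge_arc \<epsilon> u (i, l2)) (\<lambda>t. \<phi> (edge_chart \<epsilon> (i, l2) (s, t)) * dy_pullback m t))"
      unfolding sum_single_form_components[OF assms(1,2)] unfolding arcint_along_edge by simp
    also have "\<dots> = edge_weight \<epsilon> u l (i, l2) * push_integral lborel (edge_chart \<epsilon> (i, l2)) (edge_density \<epsilon> u m (i, l2)) \<phi>"
      using iterated_integral_edge_box[OF assms(3), of \<epsilon> u "(i, l2)" m]
      by (simp add: edge_weight_def)
    finally show ?thesis .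
  qed
  have "single_form (hidx l m) \<phi> E12 = (\<lambda>_. 0)"
    by (auto simp: single_form_def hidx_def)
  then show ?thesis
    unfolding Gcur_def jump_functional_def using edge by (simp add: case_prod_beta)
qed

section \<open>Polar decomposition of the current\<close>

lemma abs_le_norm2: "\<bar>v I\<bar> \<le> norm2 v"
proof -
  have "(v I)\<^sup>2 \<le> pair2 v v"
    unfolding pair2_def by (cases I) (auto simp: power2_eq_square)
  then show ?thesis
    unfolding norm2_def using real_sqrt_le_mono by fastforce
qed

lemma hidx_pair_le_norm2:
  assumes "l \<in> {1, 2}"
  shows "sqrt ((v (hidx l 1))\<^sup>2 + (v (hidx l 2))\<^sup>2) \<le> norm2 v"
proof -
  have "(v (hidx l 1))\<^sup>2 + (v (hidx l 2))\<^sup>2 \<le> pair2 v v"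
    using assms by (auto simp: pair2_def hidx_def power2_eq_square)
  then show ?thesis
    unfolding norm2_def by (rule real_sqrt_le_mono)
qed

lemma test_form_single_form:
  assumes "Cinf \<phi>" "compact C" "C \<subseteq> \<Omega> \<times> UNIV" "{p. \<phi> p \<noteq> 0} \<subseteq> C"
  shows "test_form \<Omega> (single_form I \<phi>)"
proof -
  have "closure {p. \<phi> p \<noteq> 0} \<subseteq> C"
    using assms(2,4) by (simp add: closure_minimal compact_imp_closed)
  moreover have "compact (closure {p. \<phi> p \<noteq> 0})"
    using assms(2,4) by (meson bounded_subset compact_closure compact_imp_bounded)
  moreover have "Cinf (\<lambda>_::complex \<times> complex. 0::real)"
    by (simp add: Cinf_def Ck_const)
  ultimately show ?thesis
    using assms(1,3) unfolding test_form_def single_form_def by auto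
qed

lemma pair2_single_form:
  assumes "l \<in> {1, 2}" "m \<in> {1, 2}"
  shows "pair2 (\<lambda>J. single_form (hidx l m) \<phi> J p) v = \<phi> p * v (hidx l m)"
  using assms by (auto simp: pair2_def hidx_def single_form_def)

context
  fixes \<Omega> G \<mu> \<xi>
  assumes polar: "is_polar \<Omega> G \<mu> \<xi>"
begin

lemma sets_polar: "sets \<mu> = sets borel"
  using polar by (simp add: is_polar_def)

lemma polar_component_measurable: "(\<lambda>p. \<xi> p I) \<in> borel_measurable \<mu>"
  using polar by (simp add: is_polar_def)

lemma polar_component_borel_measurable: "(\<lambda>p. \<xi> p I) \<in> borel_measurable borel"
  by (subst measurable_cong_sets[OF sets_polar[symmetric] refl]) (rule polar_component_measurable)

lemma id_measurable_polar: "id \<in> \<mu> \<rightarrow>\<^sub>M borel"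
  using measurable_ident_sets[OF sets_polar] by (simp add: id_def)

lemma AE_polar_norm2: "AE p in \<mu>. norm2 (\<xi> p) = 1"
  using polar by (simp add: is_polar_def)

end

context
  fixes \<Omega> G \<mu> \<xi> and V :: "(complex \<times> complex) set"
  assumes polar: "is_polar \<Omega> G \<mu> \<xi>"
    and V: "open V" "compact (closure V)" "closure V \<subseteq> \<Omega> \<times> UNIV"
begin

lemma integrable_polar_indicator_bounded:
  fixes g :: "complex \<times> complex \<Rightarrow> real"
  assumes "g \<in> borel_measurable \<mu>" "AE p in \<mu>. \<bar>g p\<bar> \<le> 1"
  shows "integrable \<mu> (\<lambda>p. indicator V p * g p)"
proof (rule Bochner_Integration.integrable_bound)
  have "emeasure \<mu> V \<le> emeasure \<mu> (closure V)"
    by (rule emeasure_mono) (auto simp: sets_polar[OF polar] closure_subset)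
  also have "\<dots> < \<infinity>"
    using polar V by (simp add: is_polar_def)
  finally show "integrable \<mu> (indicator V :: _ \<Rightarrow> real)"
    using V(1) by (simp add: sets_polar[OF polar])
  show "(\<lambda>p. indicator V p * g p) \<in> borel_measurable \<mu>"
    using V(1) by (intro borel_measurable_times borel_measurable_indicator assms(1)) (simp add: sets_polar[OF polar])
  show "AE p in \<mu>. norm (indicator V p * g p) \<le> norm (indicator V p :: real)"
    using assms(2) by eventually_elim (auto simp: indicator_def)
qed

lemma integrable_polar_subset:
  fixes g :: "complex \<times> complex \<Rightarrow> real"
  assumes "B \<in> sets borel" "B \<subseteq> V" "g \<in> borel_measurable borel" "AE p in \<mu>. \<bar>g p\<bar> \<le> 1"
  shows "integrable \<mu> (\<lambda>p. indicator B p * g p)"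
proof -
  have "g \<in> borel_measurable \<mu>" "B \<in> sets \<mu>"
    using assms(1,3) measurable_cong_sets[OF sets_polar[OF polar] refl] sets_polar[OF polar] by auto
  then have "(\<lambda>p. indicator B p * g p) \<in> borel_measurable \<mu>"
    by (intro borel_measurable_times borel_measurable_indicator)
  moreover have "AE p in \<mu>. \<bar>indicator B p * g p\<bar> \<le> 1"
    using assms(4) by (rule eventually_mono) (auto simp: indicator_def)
  ultimately have "integrable \<mu> (\<lambda>p. indicator V p * (indicator B p * g p))"
    by (rule integrable_polar_indicator_bounded)
  moreover have "indicator V p * (indicator B p * g p) = indicator B p * g p" for p
    using assms(2) by (auto simp: indicator_def)
  ultimately show ?thesis
    by simp
qed

lemma integrable_polar_subset_component:
  assumes "B \<in> sets borel" "B \<subseteq> V"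
  shows "integrable \<mu> (\<lambda>p. indicator B p * \<xi> p I)"
proof (rule integrable_polar_subset[OF assms polar_component_borel_measurable[OF polar]])
  have "\<bar>\<xi> p I\<bar> \<le> 1" if "norm2 (\<xi> p) = 1" for p
    using abs_le_norm2[of "\<xi> p" I] that by simp
  then show "AE p in \<mu>. \<bar>\<xi> p I\<bar> \<le> 1"
    by (rule eventually_mono[OF AE_polar_norm2[OF polar]])
qed

lemma integrable_polar_subset_hidx_pair:
  assumes "B \<in> sets borel" "B \<subseteq> V" "l \<in> {1, 2}"
  shows "integrable \<mu> (\<lambda>p. indicator B p * sqrt ((\<xi> p (hidx l 1))\<^sup>2 + (\<xi> p (hidx l 2))\<^sup>2))"
proof (rule integrable_polar_subset[OF assms(1,2)])
  have [measurable]: "(\<lambda>p. \<xi> p I) \<in> borel_measurable borel" for I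
    by (rule polar_component_borel_measurable[OF polar])
  show "(\<lambda>p. sqrt ((\<xi> p (hidx l 1))\<^sup>2 + (\<xi> p (hidx l 2))\<^sup>2)) \<in> borel_measurable borel"
    by measurable
  have "\<bar>sqrt ((\<xi> p (hidx l 1))\<^sup>2 + (\<xi> p (hidx l 2))\<^sup>2)\<bar> \<le> 1" if "norm2 (\<xi> p) = 1" for p
    using hidx_pair_le_norm2[OF assms(3), of "\<xi> p"] that by simp
  then show "AE p in \<mu>. \<bar>sqrt ((\<xi> p (hidx l 1))\<^sup>2 + (\<xi> p (hidx l 2))\<^sup>2)\<bar> \<le> 1"
    by (rule eventually_mono[OF AE_polar_norm2[OF polar]])
qed

end

context
  fixes \<Omega> \<epsilon> u \<mu> \<xi> and l m :: nat and V :: "(complex \<times> complex) set"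
  assumes polar: "is_polar \<Omega> (Gcur \<epsilon> \<Omega> u) \<mu> \<xi>"
    and V: "open V" "compact (closure V)" "closure V \<subseteq> \<Omega> \<times> UNIV"
    and lm: "l \<in> {1, 2}" "m \<in> {1, 2}"
begin

lemma tendsto_jump_functional:
  assumes "\<And>n. f n \<in> borel_measurable borel" "g \<in> borel_measurable borel"
    and "\<And>n y. \<bar>f n y\<bar> \<le> 1" "\<And>y. (\<lambda>n. f n y) \<longlonglongrightarrow> g y"
  shows "(\<lambda>n. jump_functional \<epsilon> \<Omega> u l m (f n)) \<longlonglongrightarrow> jump_functional \<epsilon> \<Omega> u l m g"
  unfolding jump_functional_def
  by (intro tendsto_sum tendsto_mult_left tendsto_push_integral[OF integrable_edge_density
        edge_chart_measurable] assms)

lemma signed_countably_additive_jump_functional: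
  "signed_countably_additive borel (\<lambda>B. jump_functional \<epsilon> \<Omega> u l m (indicator B))"
  unfolding signed_countably_additive_def jump_functional_def
  using signed_countably_additive_push_integral[OF integrable_edge_density edge_chart_measurable]
  by (auto intro!: sums_sum sums_mult simp: signed_countably_additive_def)

lemma polar_component_integral_smooth:
  assumes "Cinf \<phi>" "compact C" "C \<subseteq> V" "{p. \<phi> p \<noteq> 0} \<subseteq> C"
  shows "(\<integral>p. \<phi> p * \<xi> p (hidx l m) \<partial>\<mu>) = jump_functional \<epsilon> \<Omega> u l m \<phi>"
proof -
  have "test_form \<Omega> (single_form (hidx l m) \<phi>)"
    using assms closure_subset[of V] V(3) by (intro test_form_single_form) auto
  then have "(\<integral>p. pair2 (\<lambda>J. single_form (hidx l m) \<phi> J p) (\<xi> p) \<partial>\<mu>) = Gcur \<epsilon> \<Omega> u (single_form (hidx l m) \<phi>)"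
    using polar unfolding is_polar_def by auto
  then show ?thesis
    using Gcur_single_form[OF lm Cinf_imp_continuous_on[OF assms(1)]] by (simp add: pair2_single_form[OF lm])
qed

text \<open>The density is cut off outside \<open>V\<close>, where \<open>\<mu>\<close> is finite, so that both sides are countably
  additive in \<open>U\<close> on all Borel sets.\<close>
lemma polar_component_eq_jump_functional_open:
  assumes U: "open U" "U \<subseteq> V"
  shows "push_integral \<mu> id (\<lambda>p. indicator V p * \<xi> p (hidx l m)) (indicator U) =
    jump_functional \<epsilon> \<Omega> u l m (indicator U)"
proof -
  let ?h = "\<lambda>p. indicator V p * \<xi> p (hidx l m)"
  obtain \<phi> :: "nat \<Rightarrow> complex \<times> complex \<Rightarrow> real" where
    \<phi>: "\<And>n. Cinf (\<phi> n)" "\<And>n p. 0 \<le> \<phi> n p" "\<And>n p. \<phi> n p \<le> 1"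
    "\<And>n. \<exists>C. compact C \<and> C \<subseteq> U \<and> {p. \<phi> n p \<noteq> 0} \<subseteq> C"
    "\<And>p. (\<lambda>n. \<phi> n p) \<longlonglongrightarrow> indicator U p"
    using smooth_approx_indicator_open[OF U(1)] by blast
  have meas: "\<phi> n \<in> borel_measurable borel" for n
    by (rule borel_measurable_continuous_onI[OF Cinf_imp_continuous_on[OF \<phi>(1)]])
  have bounded: "\<bar>\<phi> n y\<bar> \<le> 1" for n y
    using \<phi>(2,3)[of n y] by simp
  have approx_eq: "push_integral \<mu> id ?h (\<phi> n) = jump_functional \<epsilon> \<Omega> u l m (\<phi> n)" for n
  proof -
    obtain C where C: "compact C" "C \<subseteq> U" "{p. \<phi> n p \<noteq> 0} \<subseteq> C"
      using \<phi>(4) by blast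
    then have "\<phi> n p * (indicator V p * \<xi> p (hidx l m)) = \<phi> n p * \<xi> p (hidx l m)" for p
      using U(2) by (cases "p \<in> V") auto
    then have "push_integral \<mu> id ?h (\<phi> n) = (\<integral>p. \<phi> n p * \<xi> p (hidx l m) \<partial>\<mu>)"
      by (simp only: push_integral_def id_apply)
    also have "\<dots> = jump_functional \<epsilon> \<Omega> u l m (\<phi> n)"
      using C U(2) by (intro polar_component_integral_smooth[OF \<phi>(1)]) auto
    finally show ?thesis .
  qed
  have "indicator U \<in> borel_measurable borel"
    using U(1) by auto
  then have "(\<lambda>n. push_integral \<mu> id ?h (\<phi> n)) \<longlonglongrightarrow> push_integral \<mu> id ?h (indicator U)"
    and "(\<lambda>n. jump_functional \<epsilon> \<Omega> u l m (\<phi> n)) \<longlonglongrightarrow> jump_functional \<epsilon> \<Omega> u l m (indicator U)"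
    by (rule tendsto_push_integral[OF integrable_polar_subset_component[OF polar V borel_open[OF V(1)] order_refl] id_measurable_polar[OF polar]
          meas _ bounded \<phi>(5)] tendsto_jump_functional[OF meas _ bounded \<phi>(5)])+
  then show ?thesis
    unfolding approx_eq by (rule LIMSEQ_unique)
qed

lemma polar_component_eq_jump_functional:
  assumes B: "B \<in> sets borel" "B \<subseteq> V"
  shows "(\<integral>p. indicator B p * \<xi> p (hidx l m) \<partial>\<mu>) = jump_functional \<epsilon> \<Omega> u l m (indicator B)"
proof -
  let ?h = "\<lambda>p. indicator V p * \<xi> p (hidx l m)"
  have "push_integral \<mu> id ?h (indicator B) = jump_functional \<epsilon> \<Omega> u l m (indicator B)"
  proof (rule signed_countably_additive_eq_on_open_imp_borel[OF _ _ V(1) _ B])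
    show "signed_countably_additive borel (\<lambda>B. push_integral \<mu> id ?h (indicator B))"
      using integrable_polar_subset_component[OF polar V borel_open[OF V(1)] order_refl]
      by (intro signed_countably_additive_push_integral) (auto simp: id_measurable_polar[OF polar])
  qed (rule signed_countably_additive_jump_functional polar_component_eq_jump_functional_open; assumption)+
  moreover have "push_integral \<mu> id ?h (indicator B) = (\<integral>p. indicator B p * \<xi> p (hidx l m) \<partial>\<mu>)"
    unfolding push_integral_def using B(2)
    by (intro Bochner_Integration.integral_cong) (auto simp: indicator_def)
  ultimately show ?thesis
    by simp
qed

end

section \<open>Approximating a direction by finitely many angles\<close>

lemma exists_grid_angle_cos_ge:
  fixes n :: nat and t :: real
  assumes "n \<ge> 1"
  shows "\<exists>k<n. cos (pi / n) \<le> cos (t - 2 * pi * k / n)"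
proof -
  define j where "j = round (t * n / (2 * pi))"
  define k where "k = nat (j mod int n)"
  have n: "real n > 0"
    using assms by simp
  have "\<bar>of_int j - t * n / (2 * pi)\<bar> \<le> 1 / 2"
    unfolding j_def by (rule of_int_round_abs_le)
  then have "\<bar>t - 2 * pi * j / n\<bar> \<le> pi / n"
    using n by (simp add: field_simps abs_le_iff)
  moreover have "pi / n \<le> pi"
    using assms by (simp add: divide_le_eq)
  ultimately have "cos (pi / n) \<le> cos \<bar>t - 2 * pi * j / n\<bar>"
    by (intro cos_monotone_0_pi_le) auto
  also have "\<dots> = cos (t - 2 * pi * k / n)"
  proof -
    have j: "j = int n * (j div int n) + int k"
      using assms by (simp add: k_def)
    have "2 * pi * j / n = 2 * pi * k / n + 2 * pi * of_int (j div int n)"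
      using n by (subst j) (simp add: field_simps)
    then show ?thesis
      by (simp add: cos_diff cos_add sin_add)
  qed
  finally show ?thesis
    using assms by (intro exI[of _ k]) (auto simp: k_def nat_less_iff)
qed

lemma exists_grid_direction:
  fixes n :: nat and a b :: real
  assumes "n \<ge> 1"
  shows "\<exists>k<n. sqrt (a\<^sup>2 + b\<^sup>2) * cos (pi / n) \<le> a * cos (2 * pi * k / n) + b * sin (2 * pi * k / n)"
proof -
  let ?z = "Complex a b"
  have "a = cmod ?z * cos (Arg ?z)" "b = cmod ?z * sin (Arg ?z)"
    using Re_rcis[of "cmod ?z" "Arg ?z"] Im_rcis[of "cmod ?z" "Arg ?z"] by (simp_all add: rcis_cmod_Arg)
  then have "a * cos \<theta> + b * sin \<theta> = sqrt (a\<^sup>2 + b\<^sup>2) * cos (Arg ?z - \<theta>)" for \<theta>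
    by (simp add: cos_diff algebra_simps norm_complex_def)
  moreover obtain k where "k < n" "cos (pi / n) \<le> cos (Arg ?z - 2 * pi * k / n)"
    using exists_grid_angle_cos_ge[OF assms] by blast
  ultimately show ?thesis
    by (intro exI[of _ k]) (auto intro: mult_left_mono)
qed

lemma direction_partition:
  fixes a b :: "'x \<Rightarrow> real" and n :: nat
  assumes "n \<ge> 1" "a \<in> borel_measurable M" "b \<in> borel_measurable M" "Q \<in> sets M"
  obtains B :: "nat \<Rightarrow> 'x set" where "\<And>k. B k \<in> sets M" "\<And>k. B k \<subseteq> Q"
    "disjoint_family_on B {..<n}" "\<And>p. p \<in> Q \<Longrightarrow> \<exists>k<n. p \<in> B k"
    "\<And>k p. p \<in> B k \<Longrightarrow>
       sqrt ((a p)\<^sup>2 + (b p)\<^sup>2) * cos (pi / n) \<le> a p * cos (2 * pi * k / n) + b p * sin (2 * pi * k / n)"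
proof
  define G where "G k = Q \<inter> {p \<in> space M.
    sqrt ((a p)\<^sup>2 + (b p)\<^sup>2) * cos (pi / n) \<le> a p * cos (2 * pi * k / n) + b p * sin (2 * pi * k / n)}"
    for k :: nat
  have "G k \<in> sets M" for k
    unfolding G_def using assms(4) by (intro sets.Int borel_measurable_le; use assms(2,3) in measurable)
  then show "disjointed G k \<in> sets M" for k
    using sets.range_disjointed_sets[of G] by blast
  show "disjointed G k \<subseteq> Q" for k
    using disjointed_subset[of G k] by (auto simp: G_def)
  show "disjoint_family_on (disjointed G) {..<n}"
    by (rule disjoint_family_on_mono[OF subset_UNIV disjoint_family_disjointed])
  show "\<exists>k<n. p \<in> disjointed G k" if p: "p \<in> Q" for p
  proof -
    obtain k where "k < n" "p \<in> G k"
      using p sets.sets_into_space[OF assms(4)] exists_grid_direction[OF assms(1), of "a p" "b p"]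
      unfolding G_def by blast
    then have "p \<in> (\<Union>i\<in>{0..<n}. disjointed G i)"
      unfolding finite_UN_disjointed_eq by auto
    then show ?thesis
      by auto
  qed
  show "sqrt ((a p)\<^sup>2 + (b p)\<^sup>2) * cos (pi / n) \<le> a p * cos (2 * pi * k / n) + b p * sin (2 * pi * k / n)"
    if "p \<in> disjointed G k" for k p
    using that disjointed_subset[of G k] by (auto simp: G_def)
qed

lemma indicator_partition_le_sum:
  fixes c :: "'x \<Rightarrow> real" and n :: nat
  assumes "disjoint_family_on B {..<n}" "\<And>k. B k \<subseteq> Q" "\<And>p. p \<in> Q \<Longrightarrow> \<exists>k<n. p \<in> B k"
    and "\<And>k p. p \<in> B k \<Longrightarrow> c p \<le> f k p"
  shows "indicator Q p * c p \<le> (\<Sum>k<n. indicator (B k) p * f k p)"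
proof (cases "p \<in> Q")
  case True
  then obtain k0 where k0: "k0 < n" "p \<in> B k0"
    using assms(3) by blast
  have "(\<Sum>k<n. indicator (B k) p * f k p) = (\<Sum>k\<in>{..<n}. f k p * indicator (B k) p)"
    by (simp add: mult.commute)
  also have "\<dots> = f k0 p"
    using k0 by (intro sum_indicator_disjoint_family[OF assms(1)]) auto
  finally show ?thesis
    using True assms(4)[OF k0(2)] by simp
next
  case False
  then have "indicator (B k) p = (0::real)" for k
    using assms(2) by (auto simp: indicator_def)
  then show ?thesis
    using False by simp
qed

section \<open>Bounds on single edges\<close>

lemma integrable_indicator_edge_box: "integrable lborel (indicator (edge_box \<epsilon> u e) :: _ \<Rightarrow> real)"
proof -
  obtain lo hi where box: "edge_box \<epsilon> u e = cbox (0, lo) (1, hi)"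
    by (rule edge_box_cbox)
  show ?thesis
    unfolding box by (rule integrable_real_indicator) (use emeasure_lborel_cbox_finite in auto)
qed

lemma abs_sum_edge_push_integrals_le:
  fixes B :: "nat \<Rightarrow> (complex \<times> complex) set" and \<theta> :: "nat \<Rightarrow> real"
  assumes disj: "disjoint_family_on B {..<n}" and B: "\<And>k. B k \<in> sets borel" "\<And>k. k < n \<Longrightarrow> B k \<subseteq> Q"
    and Q: "Q \<in> sets borel"
  shows "\<bar>\<Sum>k<n. cos (\<theta> k) * push_integral lborel (edge_chart \<epsilon> e) (edge_density \<epsilon> u 1 e) (indicator (B k))
              + sin (\<theta> k) * push_integral lborel (edge_chart \<epsilon> e) (edge_density \<epsilon> u 2 e) (indicator (B k))\<bar>
         \<le> (\<integral>x. indicator Q (edge_chart \<epsilon> e x) * indicator (edge_box \<epsilon> u e) x \<partial>lborel)"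
proof -
  let ?F = "edge_chart \<epsilon> e" and ?b = "indicator (edge_box \<epsilon> u e) :: _ \<Rightarrow> real"
  let ?d = "\<lambda>m k x. indicator (B k) (?F x) * edge_density \<epsilon> u m e x"
  define T where "T k x = cos (\<theta> k) * ?d 1 k x + sin (\<theta> k) * ?d 2 k x" for k x
  have int_d: "integrable lborel (?d m k)" for m k
    using B(1) by (intro integrable_push_integrand[OF integrable_edge_density edge_chart_measurable]) auto
  then have int_T: "integrable lborel (T k)" for k
    unfolding T_def by simp
  have "(\<Sum>k<n. cos (\<theta> k) * push_integral lborel ?F (edge_density \<epsilon> u 1 e) (indicator (B k))
      + sin (\<theta> k) * push_integral lborel ?F (edge_density \<epsilon> u 2 e) (indicator (B k)))
      = (\<integral>x. (\<Sum>k<n. T k x) \<partial>lborel)"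
    using int_d int_T by (simp add: push_integral_def T_def Bochner_Integration.integral_sum)
  moreover have "\<bar>\<Sum>k<n. T k x\<bar> \<le> indicator Q (?F x) * ?b x" for x
  proof -
    have T_eq: "T k x = indicator (B k) (?F x) * ?b x * sin (\<theta> k - snd x)" for k
      by (simp add: T_def edge_density_def dy_pullback_def sin_diff algebra_simps)
    show ?thesis
    proof (cases "\<exists>k<n. ?F x \<in> B k")
      case True
      then obtain k0 where k0: "k0 < n" "?F x \<in> B k0"
        by blast
      have "(\<Sum>k<n. T k x) = (\<Sum>k\<in>{..<n}. ?b x * sin (\<theta> k - snd x) * indicator (B k) (?F x))"
        unfolding T_eq by (simp add: algebra_simps)
      also have "\<dots> = ?b x * sin (\<theta> k0 - snd x)"
        using k0 by (intro sum_indicator_disjoint_family[OF disj]) auto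
      finally show ?thesis
        using k0 B(2) by (auto simp: abs_mult indicator_def)
    qed (auto simp: T_eq indicator_def)
  qed
  then have "\<bar>\<integral>x. (\<Sum>k<n. T k x) \<partial>lborel\<bar> \<le> (\<integral>x. indicator Q (?F x) * ?b x \<partial>lborel)"
    by (intro integral_abs_bound_integral Bochner_Integration.integrable_sum int_T
        integrable_push_integrand[OF integrable_indicator_edge_box edge_chart_measurable])
      (use Q in auto)
  ultimately show ?thesis
    by simp
qed

lemma integral_indicator_edge_box_le:
  assumes "\<And>p. p \<in> Q \<Longrightarrow> fst p \<in> A" "Q \<in> sets borel"
  shows "(\<integral>x. indicator Q (edge_chart \<epsilon> e x) * indicator (edge_box \<epsilon> u e) x \<partial>lborel)
    \<le> (if \<exists>s\<in>{0..1}. edgept \<epsilon> (fst e) (snd e) s \<in> A then \<bar>edge_jump \<epsilon> u e\<bar> else 0)"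
proof (cases "\<exists>s\<in>{0..1}. edgept \<epsilon> (fst e) (snd e) s \<in> A")
  case True
  have "(\<integral>x. indicator Q (edge_chart \<epsilon> e x) * indicator (edge_box \<epsilon> u e) x \<partial>lborel)
      \<le> (\<integral>x. indicator (edge_box \<epsilon> u e) x \<partial>lborel :: real)"
  proof (rule integral_mono[OF _ integrable_indicator_edge_box])
    show "integrable lborel (\<lambda>x. indicator Q (edge_chart \<epsilon> e x) * indicator (edge_box \<epsilon> u e) x :: real)"
      using assms(2) by (intro integrable_push_integrand[OF integrable_indicator_edge_box edge_chart_measurable]) auto
  qed (auto simp: indicator_def)
  then show ?thesis
    using True measure_edge_box by simp
next
  case False
  have zero: "indicator Q (edge_chart \<epsilon> e x) * indicator (edge_box \<epsilon> u e) x = (0::real)" for x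
  proof (cases "x \<in> edge_box \<epsilon> u e \<and> edge_chart \<epsilon> e x \<in> Q")
    case True
    then have "fst x \<in> {0..1}" "edgept \<epsilon> (fst e) (snd e) (fst x) \<in> A"
      using assms(1)[of "edge_chart \<epsilon> e x"] by (auto simp: edge_box_def edge_chart_def)
    then show ?thesis
      using False by blast
  qed (auto simp: indicator_def)
  show ?thesis
    using False by (simp only: zero Bochner_Integration.integral_zero) simp
qed

lemma edge_weight_mult_le:
  assumes "\<epsilon> > 0" and X: "\<bar>X\<bar> \<le> (if M then \<bar>edge_jump \<epsilon> u e\<bar> else 0)"
  shows "edge_weight \<epsilon> u l e * X \<le> (if snd e = l \<and> M then \<epsilon> * \<bar>edge_jump \<epsilon> u e\<bar> else 0)"
proof (cases "snd e = l")
  case True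
  have "edge_weight \<epsilon> u l e * X \<le> \<bar>edge_weight \<epsilon> u l e\<bar> * \<bar>X\<bar>"
    by (simp add: abs_mult[symmetric])
  also have "\<dots> = \<epsilon> * \<bar>X\<bar>"
    using True assms(1) by (simp add: edge_weight_def edge_orientation_def abs_mult power_abs)
  also have "\<dots> \<le> \<epsilon> * (if M then \<bar>edge_jump \<epsilon> u e\<bar> else 0)"
    using X assms(1) by (intro mult_left_mono) auto
  finally show ?thesis
    using True by (cases M) auto
qed (simp add: edge_weight_def)

lemma sum_directions_jump_functional:
  "(\<Sum>k<n. cos (\<theta> k) * jump_functional \<epsilon> \<Omega> u l 1 (indicator (B k))
          + sin (\<theta> k) * jump_functional \<epsilon> \<Omega> u l 2 (indicator (B k))) =
   (\<Sum>e\<in>edges \<epsilon> \<Omega>. edge_weight \<epsilon> u l e *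
      (\<Sum>k<n. cos (\<theta> k) * push_integral lborel (edge_chart \<epsilon> e) (edge_density \<epsilon> u 1 e) (indicator (B k))
            + sin (\<theta> k) * push_integral lborel (edge_chart \<epsilon> e) (edge_density \<epsilon> u 2 e) (indicator (B k))))"
  unfolding jump_functional_def sum_distrib_left sum.distrib[symmetric]
  by (subst sum.swap) (simp add: algebra_simps)

context
  fixes \<Omega> \<epsilon> u \<mu> \<xi> and l :: nat and V :: "(complex \<times> complex) set"
  assumes polar: "is_polar \<Omega> (Gcur \<epsilon> \<Omega> u) \<mu> \<xi>"
    and V: "open V" "compact (closure V)" "closure V \<subseteq> \<Omega> \<times> UNIV"
    and l: "l \<in> {1, 2}"
begin

lemma component_bound:
  fixes n :: nat
  assumes "\<epsilon> > 0" "n \<ge> 1"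
    and Q: "Q \<in> sets borel" "Q \<subseteq> V" "\<And>p. p \<in> Q \<Longrightarrow> fst p \<in> A"
  shows "cos (pi / n) * (\<integral>p. indicator Q p * sqrt ((\<xi> p (hidx l 1))\<^sup>2 + (\<xi> p (hidx l 2))\<^sup>2) \<partial>\<mu>)
     \<le> (\<Sum>e\<in>edges \<epsilon> \<Omega>. if snd e = l \<and> (\<exists>s\<in>{0..1}. edgept \<epsilon> (fst e) (snd e) s \<in> A)
            then \<epsilon> * \<bar>edge_jump \<epsilon> u e\<bar> else 0)"
proof -
  define \<xi>1 where "\<xi>1 p = \<xi> p (hidx l 1)" for p
  define \<xi>2 where "\<xi>2 p = \<xi> p (hidx l 2)" for p
  define \<theta> where "\<theta> k = 2 * pi * real k / real n" for k
  have "\<xi>1 \<in> borel_measurable borel" "\<xi>2 \<in> borel_measurable borel"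
    unfolding \<xi>1_def \<xi>2_def by (rule polar_component_borel_measurable[OF polar])+
  then obtain B where B: "\<And>k. B k \<in> sets borel" "\<And>k. B k \<subseteq> Q" "disjoint_family_on B {..<n}"
    "\<And>p. p \<in> Q \<Longrightarrow> \<exists>k<n. p \<in> B k"
    "\<And>k p. p \<in> B k \<Longrightarrow> sqrt ((\<xi>1 p)\<^sup>2 + (\<xi>2 p)\<^sup>2) * cos (pi / n) \<le> \<xi>1 p * cos (\<theta> k) + \<xi>2 p * sin (\<theta> k)"
    using direction_partition[OF assms(2) _ _ Q(1)] unfolding \<theta>_def by metis
  define R where "R p = (\<Sum>k<n. cos (\<theta> k) * (indicator (B k) p * \<xi>1 p) + sin (\<theta> k) * (indicator (B k) p * \<xi>2 p))"
    for p
  have int_B: "integrable \<mu> (\<lambda>p. indicator (B k) p * \<xi> p (hidx l m))" for k m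
    using B(1,2) Q(2) by (intro integrable_polar_subset_component[OF polar V]) auto
  have pointwise: "cos (pi / n) * (indicator Q p * sqrt ((\<xi>1 p)\<^sup>2 + (\<xi>2 p)\<^sup>2)) \<le> R p" for p
    using indicator_partition_le_sum[where c = "\<lambda>p. sqrt ((\<xi>1 p)\<^sup>2 + (\<xi>2 p)\<^sup>2) * cos (pi / n)"
        and f = "\<lambda>k p. \<xi>1 p * cos (\<theta> k) + \<xi>2 p * sin (\<theta> k)", OF B(3,2,4,5)]
    by (simp add: R_def algebra_simps)
  have "integrable \<mu> R"
    unfolding R_def \<xi>1_def \<xi>2_def using int_B
    by (intro Bochner_Integration.integrable_sum Bochner_Integration.integrable_add integrable_mult_right)
  moreover have "integrable \<mu> (\<lambda>p. indicator Q p * sqrt ((\<xi>1 p)\<^sup>2 + (\<xi>2 p)\<^sup>2))"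
    unfolding \<xi>1_def \<xi>2_def by (rule integrable_polar_subset_hidx_pair[OF polar V Q(1,2) l])
  ultimately have "cos (pi / n) * (\<integral>p. indicator Q p * sqrt ((\<xi>1 p)\<^sup>2 + (\<xi>2 p)\<^sup>2) \<partial>\<mu>) \<le> (\<integral>p. R p \<partial>\<mu>)"
    using pointwise by (subst integral_mult_right_zero[symmetric]) (intro integral_mono; simp)
  also have "(\<integral>p. R p \<partial>\<mu>) = (\<Sum>k<n. cos (\<theta> k) * jump_functional \<epsilon> \<Omega> u l 1 (indicator (B k))
          + sin (\<theta> k) * jump_functional \<epsilon> \<Omega> u l 2 (indicator (B k)))"
  proof -
    have "(\<integral>p. indicator (B k) p * \<xi> p (hidx l m) \<partial>\<mu>) = jump_functional \<epsilon> \<Omega> u l m (indicator (B k))"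
      if "m \<in> {1, 2}" for k m
      using B(1,2) Q(2) by (intro polar_component_eq_jump_functional[OF polar V l that]) auto
    then show ?thesis
      unfolding R_def \<xi>1_def \<xi>2_def using int_B by (simp add: Bochner_Integration.integral_sum)
  qed
  also have "\<dots> \<le> (\<Sum>e\<in>edges \<epsilon> \<Omega>. if snd e = l \<and> (\<exists>s\<in>{0..1}. edgept \<epsilon> (fst e) (snd e) s \<in> A)
            then \<epsilon> * \<bar>edge_jump \<epsilon> u e\<bar> else 0)"
    unfolding sum_directions_jump_functional
    by (intro sum_mono edge_weight_mult_le[OF assms(1)] order.trans[OF abs_sum_edge_push_integrals_le
          integral_indicator_edge_box_le] B(1,3)) (use B(2) Q in auto)
  finally show ?thesis
    unfolding \<xi>1_def \<xi>2_def .
qed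

end

section \<open>Counting edges in the discrete energy\<close>

lemma Lpt_add: "Lpt \<epsilon> (i + j) = Lpt \<epsilon> i + Lpt \<epsilon> j"
  by (cases i, cases j) (simp add: Lpt_def complex_eq_iff algebra_simps)

lemma dist_Lpt_evec:
  assumes "l \<in> {1, 2}"
  shows "dist (Lpt \<epsilon> i) (Lpt \<epsilon> (i + evec l)) = \<bar>\<epsilon>\<bar>"
proof -
  have "norm (Lpt \<epsilon> (evec l)) = \<bar>\<epsilon>\<bar>"
    using assms by (auto simp: Lpt_def evec_def complex_norm)
  then show ?thesis
    by (simp add: dist_norm Lpt_add)
qed

lemma dist_edgept_endpoints:
  assumes "l \<in> {1, 2}" "s \<in> {0..1}" "\<epsilon> > 0"
  shows "dist (edgept \<epsilon> i l s) (Lpt \<epsilon> (i + evec l)) \<le> \<epsilon>" "dist (edgept \<epsilon> i l s) (Lpt \<epsilon> i) \<le> 2 * \<epsilon>"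
proof -
  have "norm (edgept \<epsilon> i l s - Lpt \<epsilon> (i + evec l)) = \<epsilon> * s"
    using assms by (auto simp: edgept_def norm_mult)
  then show *: "dist (edgept \<epsilon> i l s) (Lpt \<epsilon> (i + evec l)) \<le> \<epsilon>"
    using assms by (simp add: dist_norm mult_left_le)
  show "dist (edgept \<epsilon> i l s) (Lpt \<epsilon> i) \<le> 2 * \<epsilon>"
    using dist_triangle[of "edgept \<epsilon> i l s" "Lpt \<epsilon> i" "Lpt \<epsilon> (i + evec l)"] *
      dist_Lpt_evec[OF assms(1), of \<epsilon> i] assms(3) by (simp add: dist_commute)
qed

lemma finite_lattice_points:
  assumes "bounded S" "\<epsilon> > 0"
  shows "finite {i. Lpt \<epsilon> i \<in> S}"
proof -
  obtain r where r: "\<And>x. x \<in> S \<Longrightarrow> norm x \<le> r"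
    using assms(1) bounded_iff by blast
  define M where "M = \<lceil>r / \<epsilon>\<rceil>"
  have "{i. Lpt \<epsilon> i \<in> S} \<subseteq> {-M..M} \<times> {-M..M}"
  proof (safe)
    fix a b assume "Lpt \<epsilon> (a, b) \<in> S"
    then have "\<bar>\<epsilon> * of_int a\<bar> \<le> r" "\<bar>\<epsilon> * of_int b\<bar> \<le> r"
      using r abs_Re_le_cmod[of "Lpt \<epsilon> (a, b)"] abs_Im_le_cmod[of "Lpt \<epsilon> (a, b)"]
      by (fastforce simp: Lpt_def)+
    then have "\<bar>of_int a\<bar> \<le> r / \<epsilon>" "\<bar>of_int b\<bar> \<le> r / \<epsilon>"
      using assms(2) by (auto simp: abs_mult field_simps)
    then have "\<bar>a\<bar> \<le> M" "\<bar>b\<bar> \<le> M"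
      unfolding M_def by (auto intro: le_ceiling_iff[THEN iffD2])
    then show "a \<in> {-M..M}" "b \<in> {-M..M}"
      by auto
  qed
  then show ?thesis
    by (rule finite_subset) auto
qed

lemma energy_nonneg:
  assumes "\<epsilon> > 0" "\<And>x. norm (u x) = 1"
  shows "energy \<epsilon> \<Omega> u \<ge> 0"
  unfolding energy_def using assms by (auto intro!: sum_nonneg simp: dS1_eq_abs_Psi)

definition edge_pair :: "(int \<times> int) \<times> nat \<Rightarrow> (int \<times> int) \<times> (int \<times> int)" where
  "edge_pair e = (fst e, fst e + evec (snd e))"

lemma inj_on_edge_pair: "inj_on edge_pair {e. snd e \<in> {1, 2}}"
proof (rule inj_onI)
  fix e e' assume "e \<in> {e. snd e \<in> {1, 2}}" "e' \<in> {e. snd e \<in> {1, 2}}" "edge_pair e = edge_pair e'"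
  then show "e = e'"
    by (auto simp: edge_pair_def evec_def prod_eq_iff split: if_splits)
qed

lemma edge_pair_neq_swap: "snd e \<in> {1, 2} \<Longrightarrow> snd e' \<in> {1, 2} \<Longrightarrow> edge_pair e \<noteq> prod.swap (edge_pair e')"
  by (auto simp: edge_pair_def evec_def prod_eq_iff split: if_splits)

lemma edge_pair_in_nn_pairs:
  assumes "e \<in> edges \<epsilon> \<Omega>" "s \<in> {0..1}" "ball (edgept \<epsilon> (fst e) (snd e) s) d \<subseteq> \<Omega>" "2 * \<epsilon> < d" "\<epsilon> > 0"
  shows "edge_pair e \<in> nn_pairs \<epsilon> \<Omega>" "prod.swap (edge_pair e) \<in> nn_pairs \<epsilon> \<Omega>"
proof -
  have l: "snd e \<in> {1, 2}"
    using assms(1) by (auto simp: edges_def)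
  have "Lpt \<epsilon> (fst e) \<in> \<Omega>" "Lpt \<epsilon> (fst e + evec (snd e)) \<in> \<Omega>"
    using assms(3-5) dist_edgept_endpoints[OF l assms(2,5), of "fst e"] by (auto simp: subset_eq dist_commute)
  then show "edge_pair e \<in> nn_pairs \<epsilon> \<Omega>" "prod.swap (edge_pair e) \<in> nn_pairs \<epsilon> \<Omega>"
    using dist_Lpt_evec[OF l, of 1 "fst e"] by (simp_all add: nn_pairs_def edge_pair_def dist_commute)
qed

lemma finite_nn_pairs: "bounded \<Omega> \<Longrightarrow> \<epsilon> > 0 \<Longrightarrow> finite (nn_pairs \<epsilon> \<Omega>)"
  by (rule finite_subset[of _ "{i. Lpt \<epsilon> i \<in> \<Omega>} \<times> {i. Lpt \<epsilon> i \<in> \<Omega>}"])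
    (auto simp: nn_pairs_def intro!: finite_lattice_points)

text \<open>Each edge meeting \<open>A\<close> is counted twice in the energy, once for each ordering of its endpoints,
  which compensates the factor \<open>1 / 2\<close>.\<close>
lemma sum_edges_near_le_energy:
  assumes "bounded \<Omega>" "\<epsilon> > 0" and unit: "\<And>x. norm (u x) = 1"
    and near: "\<And>x. x \<in> A \<Longrightarrow> ball x d \<subseteq> \<Omega>" "2 * \<epsilon> < d"
  shows "(\<Sum>e\<in>edges \<epsilon> \<Omega>. if \<exists>s\<in>{0..1}. edgept \<epsilon> (fst e) (snd e) s \<in> A then \<epsilon> * \<bar>edge_jump \<epsilon> u e\<bar> else 0)
         \<le> energy \<epsilon> \<Omega> u"
proof (cases "finite (edges \<epsilon> \<Omega>)")
  case False
  then show ?thesis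
    using energy_nonneg[OF assms(2) unit] by simp
next
  case True
  define f where "f = (\<lambda>(i, j). \<epsilon> * dS1 (u (Lpt \<epsilon> i)) (u (Lpt \<epsilon> j)))"
  define EA where "EA = {e \<in> edges \<epsilon> \<Omega>. \<exists>s\<in>{0..1}. edgept \<epsilon> (fst e) (snd e) s \<in> A}"
  have EA: "EA \<subseteq> {e. snd e \<in> {1, 2}}" "finite EA"
    using True by (auto simp: EA_def edges_def)
  have inj: "inj_on edge_pair EA" "inj_on (prod.swap \<circ> edge_pair) EA"
    using inj_on_subset[OF inj_on_edge_pair EA(1)] by (auto simp: comp_inj_on)
  have "f (prod.swap p) = f p" for p
    by (cases p) (simp add: f_def dS1_def mult.commute)
  moreover have "f (edge_pair e) = \<epsilon> * \<bar>edge_jump \<epsilon> u e\<bar>" for e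
    by (simp add: f_def edge_pair_def edge_jump_def dS1_eq_abs_Psi[OF unit unit])
  ultimately have "2 * (\<Sum>e\<in>EA. \<epsilon> * \<bar>edge_jump \<epsilon> u e\<bar>) = sum f (edge_pair ` EA) + sum f ((prod.swap \<circ> edge_pair) ` EA)"
    by (simp only: sum.reindex[OF inj(1)] sum.reindex[OF inj(2)]) simp
  also have "\<dots> = sum f (edge_pair ` EA \<union> (prod.swap \<circ> edge_pair) ` EA)"
  proof (intro sum.union_disjoint[symmetric] finite_imageI EA(2))
    have "edge_pair e \<noteq> prod.swap (edge_pair e')" if "e \<in> EA" "e' \<in> EA" for e e'
      using that EA(1) by (intro edge_pair_neq_swap) auto
    then show "edge_pair ` EA \<inter> (prod.swap \<circ> edge_pair) ` EA = {}"
      by (auto simp: image_iff) (metis)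
  qed
  also have "\<dots> \<le> sum f (nn_pairs \<epsilon> \<Omega>)"
  proof (rule sum_mono2[OF finite_nn_pairs[OF assms(1,2)]])
    have "edge_pair e \<in> nn_pairs \<epsilon> \<Omega> \<and> prod.swap (edge_pair e) \<in> nn_pairs \<epsilon> \<Omega>" if e: "e \<in> EA" for e
    proof -
      obtain s where "e \<in> edges \<epsilon> \<Omega>" "s \<in> {0..1}" "edgept \<epsilon> (fst e) (snd e) s \<in> A"
        using e unfolding EA_def by blast
      then show ?thesis
        using edge_pair_in_nn_pairs[of e \<epsilon> \<Omega> s d] near assms(2) by blast
    qed
    then show "edge_pair ` EA \<union> (prod.swap \<circ> edge_pair) ` EA \<subseteq> nn_pairs \<epsilon> \<Omega>"
      by auto
    show "0 \<le> f p" for p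
      using assms(2) by (cases p) (simp add: f_def dS1_eq_abs_Psi[OF unit unit])
  qed
  finally show ?thesis
    using True by (simp add: energy_def f_def EA_def sum.inter_filter)
qed

section \<open>The lower bound\<close>

lemma le_of_cos_pi_div_mult_le:
  fixes x y :: real
  assumes "\<And>n. (1::nat) \<le> n \<Longrightarrow> cos (pi / real n) * x \<le> y"
  shows "x \<le> y"
proof (rule LIMSEQ_le_const2)
  have "(\<lambda>n. cos (pi * inverse (real n)) * x) \<longlonglongrightarrow> cos (pi * 0) * x"
    by (intro tendsto_intros lim_inverse_n)
  then show "(\<lambda>n. cos (pi / real n) * x) \<longlonglongrightarrow> x"
    by (simp add: divide_inverse)
  show "\<exists>N. \<forall>n\<ge>N. cos (pi / real n) * x \<le> y"
    using assms by (intro exI[of _ 1]) auto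
qed

lemma nn_integral_Times_UNIV_le:
  fixes f :: "'a \<times> 'b::real_normed_vector \<Rightarrow> ennreal"
  assumes "f \<in> borel_measurable M" "\<And>r. A \<times> ball 0 r \<in> sets M"
    and "\<And>r. r \<ge> 0 \<Longrightarrow> (\<integral>\<^sup>+ p. f p * indicator (A \<times> ball 0 r) p \<partial>M) \<le> c"
  shows "(\<integral>\<^sup>+ p\<in>A \<times> UNIV. f p \<partial>M) \<le> c"
proof -
  define g where "g n p = f p * indicator (A \<times> ball 0 (real n)) p" for n p
  have "incseq g"
    by (intro incseq_SucI le_funI) (auto simp: g_def indicator_def)
  moreover have "g n \<in> borel_measurable M" for n
    unfolding g_def using assms(1,2) by measurable
  moreover have "(SUP n. g n p) = f p * indicator (A \<times> UNIV) p" for p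
  proof (cases "fst p \<in> A")
    case True
    obtain n0 :: nat where "norm (snd p) < n0"
      using reals_Archimedean2 by blast
    then have "g n0 p = f p"
      using True by (cases p) (simp add: g_def)
    moreover have "g n p \<le> f p" for n
      by (auto simp: g_def indicator_def)
    ultimately have "(SUP n. g n p) = f p"
      by (intro antisym SUP_least) (auto intro: SUP_upper2[of n0])
    then show ?thesis
      using True by (cases p) simp
  qed (cases p, simp add: g_def)
  ultimately have "(\<integral>\<^sup>+ p\<in>A \<times> UNIV. f p \<partial>M) = (SUP n. integral\<^sup>N M (g n))"
    by (simp flip: nn_integral_monotone_convergence_SUP)
  also have "\<dots> \<le> c"
    unfolding g_def by (intro SUP_least assms(3)) simp
  finally show ?thesis .
qed

lemma sum_edges_split_direction:
  "(\<Sum>e\<in>edges \<epsilon> \<Omega>. if snd e = 1 \<and> P e then c e else 0) + (\<Sum>e\<in>edges \<epsilon> \<Omega>. if snd e = 2 \<and> P e then c e else 0)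
   = (\<Sum>e\<in>edges \<epsilon> \<Omega>. if P e then c e else (0::real))"
  unfolding sum.distrib[symmetric] by (rule sum.cong) (auto simp: edges_def)

context
  fixes \<Omega> \<epsilon> u \<mu> \<xi> A d
  assumes polar: "is_polar \<Omega> (Gcur \<epsilon> \<Omega> u) \<mu> \<xi>" and "\<epsilon> > 0" "bounded \<Omega>"
    and unit: "\<And>x. norm (u x) = 1"
    and A: "open A" "compact (closure A)" "closure A \<subseteq> \<Omega>"
    and near: "\<And>x. x \<in> A \<Longrightarrow> ball x d \<subseteq> \<Omega>" "2 * \<epsilon> < d"
begin

lemma truncated_total_variation_le_energy:
  assumes "R \<ge> 0"
  shows "(\<integral>\<^sup>+ p. ennreal (Phi (\<xi> p)) * indicator (A \<times> ball 0 R) p \<partial>\<mu>) \<le> ennreal (energy \<epsilon> \<Omega> u)"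
proof -
  define Q where "Q = A \<times> ball (0::complex) R"
  define V where "V = A \<times> ball (0::complex) (R + 1)"
  define Z where "Z l p = sqrt ((\<xi> p (hidx l 1))\<^sup>2 + (\<xi> p (hidx l 2))\<^sup>2)" for l p
  define S where "S l = (\<Sum>e\<in>edges \<epsilon> \<Omega>. if snd e = l \<and> (\<exists>s\<in>{0..1}. edgept \<epsilon> (fst e) (snd e) s \<in> A)
      then \<epsilon> * \<bar>edge_jump \<epsilon> u e\<bar> else 0)" for l
  have "closure V = closure A \<times> cball 0 (R + 1)"
    unfolding V_def closure_Times using assms by simp
  then have V: "open V" "compact (closure V)" "closure V \<subseteq> \<Omega> \<times> UNIV"
    using A by (auto simp: V_def intro!: open_Times compact_Times)
  have Q: "Q \<in> sets borel" "Q \<subseteq> V" "\<And>p. p \<in> Q \<Longrightarrow> fst p \<in> A"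
    using A(1) by (auto simp: Q_def V_def intro!: borel_open open_Times)
  have int_Z: "integrable \<mu> (\<lambda>p. indicator Q p * Z l p)" if "l \<in> {1, 2}" for l
    unfolding Z_def using integrable_polar_subset_hidx_pair[OF polar V Q(1,2) that] .
  have component: "(\<integral>p. indicator Q p * Z l p \<partial>\<mu>) \<le> S l" if "l \<in> {1, 2}" for l
    unfolding Z_def S_def
    by (rule le_of_cos_pi_div_mult_le) (rule component_bound[OF polar V that \<open>\<epsilon> > 0\<close> _ Q])
  have "(\<integral>\<^sup>+ p. ennreal (Phi (\<xi> p)) * indicator (A \<times> ball 0 R) p \<partial>\<mu>)
      = (\<integral>\<^sup>+ p. ennreal (indicator Q p * Z 1 p + indicator Q p * Z 2 p) \<partial>\<mu>)"
    by (intro nn_integral_cong) (auto simp: Q_def Z_def Phi_def hidx_def indicator_def)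
  also have "\<dots> = ennreal (\<integral>p. indicator Q p * Z 1 p + indicator Q p * Z 2 p \<partial>\<mu>)"
    using int_Z by (intro nn_integral_eq_integral) (auto simp: Z_def)
  also have "\<dots> \<le> ennreal (S 1 + S 2)"
    using int_Z component by (intro ennreal_leI) (simp add: add_mono)
  also have "S 1 + S 2 \<le> energy \<epsilon> \<Omega> u"
    unfolding S_def sum_edges_split_direction by (rule sum_edges_near_le_energy[OF \<open>bounded \<Omega>\<close> \<open>\<epsilon> > 0\<close> unit near])
  finally show ?thesis
    by (simp add: ennreal_leI)
qed

lemma total_variation_le_energy:
  "(\<integral>\<^sup>+ p\<in>A \<times> UNIV. ennreal (Phi (\<xi> p)) \<partial>\<mu>) \<le> ennreal (energy \<epsilon> \<Omega> u)"
proof (rule nn_integral_Times_UNIV_le[OF _ _ truncated_total_variation_le_energy])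
  have [measurable]: "(\<lambda>p. \<xi> p I) \<in> borel_measurable \<mu>" for I
    by (rule polar_component_measurable[OF polar])
  show "(\<lambda>p. ennreal (Phi (\<xi> p))) \<in> borel_measurable \<mu>"
    unfolding Phi_def by measurable
  show "A \<times> ball 0 r \<in> sets \<mu>" for r :: real
    using A(1) sets_polar[OF polar] by (auto intro!: borel_open open_Times)
qed

end

theorem lemma4p3:
  fixes \<Omega> :: "complex set" and N :: "real \<Rightarrow> nat"
  assumes "open \<Omega>" and "bounded \<Omega>" and "lipschitz_boundary \<Omega>"
  shows "\<forall>A. open A \<and> compact (closure A) \<and> closure A \<subseteq> \<Omega> \<longrightarrow>
           (\<exists>\<epsilon>0>0. \<forall>\<epsilon>. 0 < \<epsilon> \<and> \<epsilon> < \<epsilon>0 \<longrightarrow>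
              (\<forall>u\<in>PC \<epsilon> (Sset (N \<epsilon>)). \<forall>\<mu> \<xi>. is_polar \<Omega> (Gcur \<epsilon> \<Omega> u) \<mu> \<xi> \<longrightarrow>
                 (\<integral>\<^sup>+ p\<in>A \<times> UNIV. ennreal (Phi (\<xi> p)) \<partial>\<mu>) \<le> ennreal (energy \<epsilon> \<Omega> u)))"
proof (intro allI impI)
  fix A assume A: "open A \<and> compact (closure A) \<and> closure A \<subseteq> \<Omega>"
  then obtain d where "d > 0" "(\<Union>x\<in>closure A. ball x d) \<subseteq> \<Omega>"
    using compact_subset_open_imp_ball_epsilon_subset[OF _ assms(1)] by blast
  then have near: "ball x d \<subseteq> \<Omega>" if "x \<in> A" for x
    using that closure_subset by blast
  have unit: "norm (u x) = 1" if "u \<in> PC \<epsilon> (Sset (N \<epsilon>))" for u \<epsilon> x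
    using that norm_Sset unfolding PC_def by blast
  show "\<exists>\<epsilon>0>0. \<forall>\<epsilon>. 0 < \<epsilon> \<and> \<epsilon> < \<epsilon>0 \<longrightarrow>
          (\<forall>u\<in>PC \<epsilon> (Sset (N \<epsilon>)). \<forall>\<mu> \<xi>. is_polar \<Omega> (Gcur \<epsilon> \<Omega> u) \<mu> \<xi> \<longrightarrow>
             (\<integral>\<^sup>+ p\<in>A \<times> UNIV. ennreal (Phi (\<xi> p)) \<partial>\<mu>) \<le> ennreal (energy \<epsilon> \<Omega> u))"
    using \<open>d > 0\<close> A near assms(2) unit
    by (intro exI[of _ "d / 2"]) (auto intro!: total_variation_le_energy)
qed

end
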